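(* Let $G,H$ be graphs such that $G$ is connected, has at least five vertices and has no vertices of degree two. Let $\mathcal D$ be a weak disk system in $G$, let $S$ be a subgraph of $H$ isomorphic to a subdivision of $G$, let $\mathcal D'$ be the weak disk system induced in $S$ by $\mathcal D$, and suppose $H$ has an $S$-triad (with respect to $\mathcal D'$). Then $H$ has a minor isomorphic to a 1-enlargement or a 3-enlargement of $G$, or to a weak 8-enlargement or a weak 9-enlargement of $G$ (all with respect to $\mathcal D$).
   Context: Graphs are finite and simple; paths and cycles have no repeated vertices. A segment is a maximal path whose internal vertices have degree exactly two; if $S$ is a subdivision of a graph $G$ without degree-two vertices, the segments of $S$ are the paths replacing edges of $G$ and the branch-vertices are the vertices corresponding to $V(G)$. A cycle double cover of $G$ is a set $\mathcal D$ of distinct cycles (disks) with each edge in exactly two disks; it is a weak disk system if any two distinct disks intersect in at most one vertex or in a segment. Two elements (vertices or edges) are confluent if some disk contains both. The weak disk system induced in a subdivision $S$ of $G$ is obtained by replacing each edge of each disk by its segment. An $S$-triad in $H$ consists of a vertex $x\in V(H)-V(S)$ and three paths $L_1,L_2,L_3$ with common end $x$, having no internal vertices in common with each other or with $S$, where $L_i$ ends at $x_i\in V(S)$, and $x_1,x_2,x_3$ are distinct vertices that are pairwise confluent but not all three contained in one disk of $\mathcal D'$. Splitting: for a vertex $v$ of degree $\ge4$ and a partition $(N_1,N_2)$ of its neighbours with $|N_1|,|N_2|\ge2$, replace $v$ by adjacent new vertices $v_1,v_2$ with $v_i$ adjacent to $N_i$. The split is conforming (w.r.t. $\mathcal D$)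 if (S1) among the disks containing $v$ exactly two, $D_1,D_2$, have their two neighbours of $v$ one in $N_1$ and one in $N_2$, and (S2) $D_1\cap D_2=\{v\}$; otherwise non-conforming. A 1-enlargement of $G$ is obtained by adding an edge between two non-confluent vertices. A 3-enlargement is obtained by a non-conforming split of a vertex. A weak 8-enlargement is obtained by adding a new vertex adjacent to three vertices $x_1,x_2,x_3$ of $G$ not all contained in one disk. A weak 9-enlargement is obtained, for an edge $xy$ and a vertex $u$ such that no disk contains both $u$ and the edge $xy$, by subdividing $xy$ with a new vertex and joining it to $u$. *)

theory Defs
  imports Main
begin

type_synonym 'a ugr = "'a set \<times> 'a set set"

abbreviation verts :: "'a ugr \<Rightarrow> 'a set" where "verts G \<equiv> fst G"
abbreviation edges :: "'a ugr \<Rightarrow> 'a set set" where "edges G \<equiv> snd G"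

definition ugraph :: "'a ugr \<Rightarrow> bool" where
  "ugraph G \<longleftrightarrow> finite (verts G) \<and>
     (\<forall>e\<in>edges G. \<exists>u v. e = {u, v} \<and> u \<noteq> v \<and> u \<in> verts G \<and> v \<in> verts G)"

definition subgraph :: "'a ugr \<Rightarrow> 'a ugr \<Rightarrow> bool" where
  "subgraph S H \<longleftrightarrow> ugraph S \<and> verts S \<subseteq> verts H \<and> edges S \<subseteq> edges H"

definition nbrs :: "'a ugr \<Rightarrow> 'a \<Rightarrow> 'a set" where
  "nbrs G v = {u. {u, v} \<in> edges G}"

definition deg :: "'a ugr \<Rightarrow> 'a \<Rightarrow> nat" where
  "deg G v = card (nbrs G v)"

definition connected_set :: "'a ugr \<Rightarrow> 'a set \<Rightarrow> bool" where
  "connected_set G B \<longleftrightarrow>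
     (\<forall>u\<in>B. \<forall>v\<in>B. (\<lambda>a b. a \<in> B \<and> b \<in> B \<and> {a, b} \<in> edges G)\<^sup>*\<^sup>* u v)"

definition connected_graph :: "'a ugr \<Rightarrow> bool" where
  "connected_graph G \<longleftrightarrow> verts G \<noteq> {} \<and> connected_set G (verts G)"

definition is_path :: "'a ugr \<Rightarrow> 'a list \<Rightarrow> bool" where
  "is_path G p \<longleftrightarrow> length p \<ge> 2 \<and> distinct p \<and> set p \<subseteq> verts G \<and>
     (\<forall>i. Suc i < length p \<longrightarrow> {p ! i, p ! Suc i} \<in> edges G)"

definition path_edges :: "'a list \<Rightarrow> 'a set set" where
  "path_edges p = {{p ! i, p ! Suc i} | i. Suc i < length p}"

definition interior :: "'a list \<Rightarrow> 'a set" where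
  "interior p = set (butlast (tl p))"

definition deg2_path :: "'a ugr \<Rightarrow> 'a list \<Rightarrow> bool" where
  "deg2_path G p \<longleftrightarrow> is_path G p \<and> (\<forall>v\<in>interior p. deg G v = 2)"

definition is_segment :: "'a ugr \<Rightarrow> 'a list \<Rightarrow> bool" where
  "is_segment G p \<longleftrightarrow> deg2_path G p \<and>
     (\<forall>q. deg2_path G q \<and> path_edges p \<subseteq> path_edges q \<longrightarrow> path_edges q = path_edges p)"

text \<open>Cycles (disks) are represented by their edge sets: nonempty connected 2-regular subgraphs.\<close>

definition dverts :: "'a set set \<Rightarrow> 'a set" where
  "dverts C = \<Union>C"

definition is_cycle :: "'a ugr \<Rightarrow> 'a set set \<Rightarrow> bool" where
  "is_cycle G C \<longleftrightarrow> C \<noteq> {} \<and> C \<subseteq> edges G \<and>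
     (\<forall>v \<in> dverts C. card {e\<in>C. v \<in> e} = 2) \<and> connected_set (dverts C, C) (dverts C)"

definition cycle_double_cover :: "'a ugr \<Rightarrow> 'a set set set \<Rightarrow> bool" where
  "cycle_double_cover G D \<longleftrightarrow> (\<forall>C\<in>D. is_cycle G C) \<and>
     (\<forall>e\<in>edges G. card {C\<in>D. e \<in> C} = 2)"

definition weak_disk_system :: "'a ugr \<Rightarrow> 'a set set set \<Rightarrow> bool" where
  "weak_disk_system G D \<longleftrightarrow> cycle_double_cover G D \<and>
     (\<forall>C1\<in>D. \<forall>C2\<in>D. C1 \<noteq> C2 \<longrightarrow>
        card (dverts C1 \<inter> dverts C2) \<le> 1 \<or>
        (\<exists>p. is_segment G p \<and> dverts C1 \<inter> dverts C2 = set p \<and> C1 \<inter> C2 = path_edges p))"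

definition confluent :: "'a set set set \<Rightarrow> 'a \<Rightarrow> 'a \<Rightarrow> bool" where
  "confluent D x y \<longleftrightarrow> (\<exists>C\<in>D. x \<in> dverts C \<and> y \<in> dverts C)"

definition valid_split :: "'a ugr \<Rightarrow> 'a \<Rightarrow> 'a set \<Rightarrow> 'a set \<Rightarrow> bool" where
  "valid_split G v N1 N2 \<longleftrightarrow> v \<in> verts G \<and> deg G v \<ge> 4 \<and>
     N1 \<union> N2 = nbrs G v \<and> N1 \<inter> N2 = {} \<and> card N1 \<ge> 2 \<and> card N2 \<ge> 2"

definition conforming_split :: "'a ugr \<Rightarrow> 'a set set set \<Rightarrow> 'a \<Rightarrow> 'a set \<Rightarrow> 'a set \<Rightarrow> bool" where
  "conforming_split G D v N1 N2 \<longleftrightarrow>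
     (\<exists>D1 D2. D1 \<noteq> D2 \<and>
        {C\<in>D. v \<in> dverts C \<and> (\<exists>a\<in>N1. \<exists>b\<in>N2. {v, a} \<in> C \<and> {v, b} \<in> C)} = {D1, D2} \<and>
        dverts D1 \<inter> dverts D2 = {v})"

definition split_graph :: "'a ugr \<Rightarrow> 'a \<Rightarrow> 'a set \<Rightarrow> 'a set \<Rightarrow> ('a + bool) ugr" where
  "split_graph G v N1 N2 =
     (Inl ` (verts G - {v}) \<union> {Inr True, Inr False},
      (image Inl) ` {e\<in>edges G. v \<notin> e} \<union> {{Inr True, Inr False}} \<union>
      {{Inr True, Inl a} | a. a \<in> N1} \<union> {{Inr False, Inl b} | b. b \<in> N2})"

text \<open>Enlargements; new vertices are Inr True / Inr False, old vertices are Inl v.\<close>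

definition enlargement1 :: "'a ugr \<Rightarrow> 'a set set set \<Rightarrow> ('a + bool) ugr \<Rightarrow> bool" where
  "enlargement1 G D K \<longleftrightarrow> (\<exists>x y. x \<in> verts G \<and> y \<in> verts G \<and> x \<noteq> y \<and> \<not> confluent D x y \<and>
     K = (Inl ` verts G, (image Inl) ` edges G \<union> {{Inl x, Inl y}}))"

definition enlargement3 :: "'a ugr \<Rightarrow> 'a set set set \<Rightarrow> ('a + bool) ugr \<Rightarrow> bool" where
  "enlargement3 G D K \<longleftrightarrow> (\<exists>v N1 N2. valid_split G v N1 N2 \<and> \<not> conforming_split G D v N1 N2 \<and>
     K = split_graph G v N1 N2)"

definition weak_enlargement8 :: "'a ugr \<Rightarrow> 'a set set set \<Rightarrow> ('a + bool) ugr \<Rightarrow> bool" where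
  "weak_enlargement8 G D K \<longleftrightarrow> (\<exists>x1 x2 x3. x1 \<in> verts G \<and> x2 \<in> verts G \<and> x3 \<in> verts G \<and>
     x1 \<noteq> x2 \<and> x1 \<noteq> x3 \<and> x2 \<noteq> x3 \<and> \<not> (\<exists>C\<in>D. {x1, x2, x3} \<subseteq> dverts C) \<and>
     K = (Inl ` verts G \<union> {Inr True},
          (image Inl) ` edges G \<union> {{Inr True, Inl x1}, {Inr True, Inl x2}, {Inr True, Inl x3}}))"

definition weak_enlargement9 :: "'a ugr \<Rightarrow> 'a set set set \<Rightarrow> ('a + bool) ugr \<Rightarrow> bool" where
  "weak_enlargement9 G D K \<longleftrightarrow> (\<exists>x y u. {x, y} \<in> edges G \<and> u \<in> verts G \<and>
     \<not> (\<exists>C\<in>D. u \<in> dverts C \<and> {x, y} \<in> C) \<and>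
     K = (Inl ` verts G \<union> {Inr True},
          (image Inl) ` (edges G - {{x, y}}) \<union> {{Inr True, Inl x}, {Inr True, Inl y}, {Inr True, Inl u}}))"

definition has_minor :: "'b ugr \<Rightarrow> 'c ugr \<Rightarrow> bool" where
  "has_minor H K \<longleftrightarrow> (\<exists>B :: 'c \<Rightarrow> 'b set.
     (\<forall>a\<in>verts K. B a \<noteq> {} \<and> B a \<subseteq> verts H \<and> connected_set H (B a)) \<and>
     (\<forall>a\<in>verts K. \<forall>b\<in>verts K. a \<noteq> b \<longrightarrow> B a \<inter> B b = {}) \<and>
     (\<forall>e\<in>edges K. \<exists>a b h h'. e = {a, b} \<and> h \<in> B a \<and> h' \<in> B b \<and> {h, h'} \<in> edges H))"

text \<open>S is (isomorphic to) a subdivision of G, witnessed by the branch-vertex map phi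
  and the segments P e replacing the edges e of G.\<close>

definition subdivision_model :: "'a ugr \<Rightarrow> 'b ugr \<Rightarrow> ('a \<Rightarrow> 'b) \<Rightarrow> ('a set \<Rightarrow> 'b list) \<Rightarrow> bool" where
  "subdivision_model G S phi P \<longleftrightarrow> inj_on phi (verts G) \<and> phi ` verts G \<subseteq> verts S \<and>
     (\<forall>e\<in>edges G. is_path S (P e) \<and> {hd (P e), last (P e)} = phi ` e \<and>
        interior (P e) \<inter> phi ` verts G = {}) \<and>
     (\<forall>e\<in>edges G. \<forall>e'\<in>edges G. e \<noteq> e' \<longrightarrow> interior (P e) \<inter> set (P e') = {}) \<and>
     verts S = phi ` verts G \<union> (\<Union>e\<in>edges G. set (P e)) \<and>
     edges S = (\<Union>e\<in>edges G. path_edges (P e))"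

text \<open>Vertex set of the disk of the induced weak disk system corresponding to disk C.\<close>

definition induced_dverts :: "('a set \<Rightarrow> 'b list) \<Rightarrow> 'a set set \<Rightarrow> 'b set" where
  "induced_dverts P C = (\<Union>e\<in>C. set (P e))"

definition has_triad :: "'b ugr \<Rightarrow> 'b ugr \<Rightarrow> 'a set set set \<Rightarrow> ('a set \<Rightarrow> 'b list) \<Rightarrow> bool" where
  "has_triad H S D P \<longleftrightarrow> (\<exists>x (L :: nat \<Rightarrow> 'b list). x \<in> verts H - verts S \<and>
     (\<forall>i<3. is_path H (L i) \<and> hd (L i) = x \<and> last (L i) \<in> verts S \<and>
            interior (L i) \<inter> verts S = {}) \<and>
     (\<forall>i<3. \<forall>j<3. i \<noteq> j \<longrightarrow> interior (L i) \<inter> interior (L j) = {} \<and> last (L i) \<noteq> last (L j)) \<and>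
     (\<forall>i<3. \<forall>j<3. \<exists>C\<in>D. last (L i) \<in> induced_dverts P C \<and> last (L j) \<in> induced_dverts P C) \<and>
     \<not> (\<exists>C\<in>D. \<forall>i<3. last (L i) \<in> induced_dverts P C))"

end

theory Submission
  imports Defs
begin

(*
  Each end of the triad lies on a branch vertex or inside a segment of S, so it has a
  "location" in G: a singleton {v} or an edge.  The three locations are pairwise on a common
  disk of D but not all on one disk (triad_locations).  The heart of the proof is purely
  combinatorial (triad_locations_resolvable): each leg can either cut the edge it ends on or be
  absorbed into one end, so that the new vertex formed by the triad sees three vertices not on
  a common disk, or the lost edges sit at a vertex v whose corresponding split is
  non-conforming.  In the latter situation the configuration forces a K4 whose triangles are
  faces of disks, and a K4 in a connected graph with at least five vertices has a vertex of
  degree at least four; its splits are non-conforming (K4_nonconforming).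
*)

section \<open>Walks, connected sets and basic graph facts\<close>

definition is_walk :: "'b ugr \<Rightarrow> 'b list \<Rightarrow> bool" where
  "is_walk H p \<longleftrightarrow> (\<forall>i. Suc i < length p \<longrightarrow> {p ! i, p ! Suc i} \<in> edges H)"

lemma is_walk_take: "is_walk H p \<Longrightarrow> is_walk H (take l p)"
  unfolding is_walk_def by auto

lemma is_walk_drop: "is_walk H p \<Longrightarrow> is_walk H (drop m p)"
  unfolding is_walk_def by (auto simp: add.commute)

lemma is_path_walk: "is_path H p \<Longrightarrow> is_walk H p"
  unfolding is_path_def is_walk_def by auto

lemma is_walk_mono: "is_walk S p \<Longrightarrow> edges S \<subseteq> edges H \<Longrightarrow> is_walk H p"
  unfolding is_walk_def by auto

lemma reach_within_mono:
  assumes "(\<lambda>a b. a \<in> X \<and> b \<in> X \<and> {a, b} \<in> edges G)\<^sup>*\<^sup>* u v" "X \<subseteq> Y"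
  shows "(\<lambda>a b. a \<in> Y \<and> b \<in> Y \<and> {a, b} \<in> edges G)\<^sup>*\<^sup>* u v"
  using assms(1) by (induction rule: rtranclp_induct)
    (use assms(2) in \<open>auto intro: rtranclp.rtrancl_into_rtrancl\<close>)

lemma connected_set_Union_common:
  assumes "\<And>X. X \<in> F \<Longrightarrow> connected_set G X \<and> c \<in> X"
  shows "connected_set G (insert c (\<Union>F))"
proof -
  let ?U = "insert c (\<Union>F)"
  let ?r = "\<lambda>a b. a \<in> ?U \<and> b \<in> ?U \<and> {a, b} \<in> edges G"
  have to_c: "?r\<^sup>*\<^sup>* u c \<and> ?r\<^sup>*\<^sup>* c u" if uU: "u \<in> ?U" for u
  proof (cases "u = c")
    case False
    then obtain X where X: "X \<in> F" "u \<in> X" using uU False by auto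
    have "X \<subseteq> ?U" using X by auto
    moreover have "connected_set G X" "c \<in> X" using assms X(1) by auto
    ultimately show ?thesis
      using X(2) reach_within_mono[of X G _ _ ?U] unfolding connected_set_def by blast
  qed simp
  show ?thesis unfolding connected_set_def
  proof (intro ballI)
    fix u v assume "u \<in> ?U" "v \<in> ?U"
    then show "?r\<^sup>*\<^sup>* u v" using to_c[of u] to_c[of v] rtranclp_trans[of ?r u c v] by blast
  qed
qed

lemma walk_connected:
  assumes "is_walk H p" "p \<noteq> []"
  shows "connected_set H (set p)"
proof -
  let ?r = "\<lambda>a b. a \<in> set p \<and> b \<in> set p \<and> {a, b} \<in> edges H"
  have from_start: "?r\<^sup>*\<^sup>* (p!0) (p!j) \<and> ?r\<^sup>*\<^sup>* (p!j) (p!0)" if "j < length p" for j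
    using that
  proof (induction j)
    case (Suc j)
    have "{p!j, p!Suc j} \<in> edges H" using assms(1) Suc.prems unfolding is_walk_def by auto
    then have step: "?r (p!j) (p!Suc j)" "?r (p!Suc j) (p!j)"
      using Suc.prems by (auto simp: insert_commute)
    have ih: "?r\<^sup>*\<^sup>* (p!0) (p!j)" "?r\<^sup>*\<^sup>* (p!j) (p!0)" using Suc by auto
    have "?r\<^sup>*\<^sup>* (p!0) (p!Suc j)" using ih(1) step(1) by (rule rtranclp.rtrancl_into_rtrancl)
    moreover have "?r\<^sup>*\<^sup>* (p!Suc j) (p!0)" using step(2) ih(2) by (rule converse_rtranclp_into_rtranclp)
    ultimately show ?case by blast
  qed simp
  show ?thesis unfolding connected_set_def
    by (metis (no_types, lifting) in_set_conv_nth from_start rtranclp_trans)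
qed

lemma connected_nbrs_closed:
  assumes "connected_graph G" "x0 \<in> X" "X \<subseteq> verts G" "\<forall>x\<in>X. nbrs G x \<subseteq> X"
  shows "verts G \<subseteq> X"
proof
  fix v assume v: "v \<in> verts G"
  have "(\<lambda>a b. a \<in> verts G \<and> b \<in> verts G \<and> {a, b} \<in> edges G)\<^sup>*\<^sup>* x0 v"
    using assms v unfolding connected_graph_def connected_set_def by auto
  then show "v \<in> X"
  proof (induction rule: rtranclp_induct)
    case (step y z)
    then have "z \<in> nbrs G y" unfolding nbrs_def by (simp add: insert_commute)
    then show ?case using step assms(4) by auto
  qed (use assms(2) in simp)
qed

lemma ugraph_edge:
  assumes "ugraph G" "e \<in> edges G"
  obtains u v where "e = {u, v}" "u \<noteq> v" "u \<in> verts G" "v \<in> verts G"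
  using assms unfolding ugraph_def by blast

lemma ugraph_edge_other_end:
  assumes "ugraph G" "e \<in> edges G" "a \<in> e"
  obtains b where "e = {a, b}" "a \<noteq> b"
proof -
  obtain x y where xy: "e = {x, y}" "x \<noteq> y" using ugraph_edge[OF assms(1,2)] by metis
  then have "e = {a, y} \<and> a \<noteq> y \<or> e = {a, x} \<and> a \<noteq> x"
    using assms(3) by (auto simp: insert_commute)
  then show ?thesis using that by blast
qed

lemma edge_not_singleton: "ugraph G \<Longrightarrow> e \<in> edges G \<Longrightarrow> e \<noteq> {v}"
  by (elim ugraph_edge) auto

lemma edge_subset_verts: "ugraph G \<Longrightarrow> e \<in> edges G \<Longrightarrow> e \<subseteq> verts G"
  by (metis ugraph_edge empty_subsetI insert_subset)

lemma nbrs_iff: "u \<in> nbrs G v \<longleftrightarrow> {u, v} \<in> edges G"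
  unfolding nbrs_def by simp

lemma nbrs_subset_verts: "ugraph G \<Longrightarrow> nbrs G v \<subseteq> verts G"
  unfolding nbrs_def using edge_subset_verts by fastforce

lemma nbrs_finite: "ugraph G \<Longrightarrow> finite (nbrs G v)"
  using nbrs_subset_verts ugraph_def finite_subset by metis

lemma nbrs_not_self: "ugraph G \<Longrightarrow> a \<in> nbrs G v \<Longrightarrow> a \<noteq> v"
  unfolding nbrs_iff using edge_not_singleton by fastforce

lemma in_dverts: "e \<in> C \<Longrightarrow> v \<in> e \<Longrightarrow> v \<in> dverts C"
  unfolding dverts_def by blast

lemma interior_conv_nth:
  assumes "length p \<ge> 2"
  shows "h \<in> interior p \<longleftrightarrow> (\<exists>j. 0 < j \<and> j < length p - 1 \<and> p ! j = h)"
proof -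
  have len: "length (butlast (tl p)) = length p - 2" by simp
  have nth: "butlast (tl p) ! j = p ! Suc j" if "j < length p - 2" for j
    using that assms by (simp add: nth_butlast nth_tl)
  show ?thesis
  proof
    assume "h \<in> interior p"
    then obtain j where "j < length (butlast (tl p))" "butlast (tl p) ! j = h"
      unfolding interior_def by (metis in_set_conv_nth)
    then show "\<exists>j. 0 < j \<and> j < length p - 1 \<and> p ! j = h"
      using len nth by (intro exI[of _ "Suc j"]) auto
  next
    assume "\<exists>j. 0 < j \<and> j < length p - 1 \<and> p ! j = h"
    then obtain i where i: "Suc i < length p - 1" "p ! Suc i = h" by (metis gr0_implies_Suc)
    then have "i < length (butlast (tl p))" "butlast (tl p) ! i = h" using len nth[of i] by auto
    then show "h \<in> interior p" unfolding interior_def by (metis nth_mem)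
  qed
qed

lemma interior_subset: "interior p \<subseteq> set p"
  unfolding interior_def by (metis in_set_butlastD list.sel(2) list.set_sel(2) subsetI)

lemma set_path_decomp:
  assumes "length p \<ge> 2"
  shows "set p = insert (hd p) (insert (last p) (interior p))"
proof -
  have ne: "p \<noteq> []" using assms by auto
  have "h = hd p \<or> h = last p \<or> h \<in> interior p" if hp: "h \<in> set p" for h
  proof -
    obtain j where j: "j < length p" "p ! j = h" using hp by (auto simp: in_set_conv_nth)
    consider "j = 0" | "j = length p - 1" | "0 < j \<and> j < length p - 1" using j by linarith
    then show ?thesis
    proof cases
      case 1 then show ?thesis using j ne by (simp add: hd_conv_nth)
    next
      case 2 then show ?thesis using j ne by (simp add: last_conv_nth)
    next
      case 3 then have "h \<in> interior p" using j interior_conv_nth[OF assms] by blast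
      then show ?thesis by blast
    qed
  qed
  moreover have "hd p \<in> set p" "last p \<in> set p" using ne by simp_all
  ultimately show ?thesis using interior_subset[of p] by blast
qed

lemma in_set_take_conv_nth: "h \<in> set (take l p) \<longleftrightarrow> (\<exists>j. j < l \<and> j < length p \<and> p ! j = h)"
  by (auto simp: in_set_conv_nth)

lemma in_set_drop_conv_nth: "h \<in> set (drop m p) \<longleftrightarrow> (\<exists>j. m \<le> j \<and> j < length p \<and> p ! j = h)"
proof
  assume "h \<in> set (drop m p)"
  then obtain i where "i < length (drop m p)" "drop m p ! i = h" by (metis in_set_conv_nth)
  then show "\<exists>j. m \<le> j \<and> j < length p \<and> p ! j = h" by (intro exI[of _ "m + i"]) auto
next
  assume "\<exists>j. m \<le> j \<and> j < length p \<and> p ! j = h"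
  then obtain j where "m \<le> j" "j < length p" "p ! j = h" by blast
  then have "j - m < length (drop m p)" "drop m p ! (j - m) = h" by auto
  then show "h \<in> set (drop m p)" by (metis nth_mem)
qed

lemma butlast_not_last: "distinct p \<Longrightarrow> h \<in> set (butlast p) \<Longrightarrow> h \<noteq> last p"
  by (metis append_butlast_last_id butlast.simps(1) distinct_append disjoint_iff
      empty_iff empty_set list.set_intros(1))

section \<open>Weak disk systems in graphs without degree-two vertices\<close>

lemma dverts_subset: "ugraph G \<Longrightarrow> C \<subseteq> edges G \<Longrightarrow> dverts C \<subseteq> verts G"
  unfolding dverts_def using edge_subset_verts by blast

lemma wds_disk_edges: "weak_disk_system G D \<Longrightarrow> C \<in> D \<Longrightarrow> C \<subseteq> edges G"
  unfolding weak_disk_system_def cycle_double_cover_def is_cycle_def by blast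

lemma cycle_no_three_edges_at:
  assumes "is_cycle G C" "{v, a} \<in> C" "{v, b} \<in> C" "{v, c} \<in> C"
    and "a \<noteq> b" "a \<noteq> c" "b \<noteq> c"
  shows False
proof -
  have v: "v \<in> dverts C" using in_dverts[OF assms(2)] by simp
  then have two: "card {e\<in>C. v \<in> e} = 2" using assms(1) unfolding is_cycle_def by blast
  then have "finite {e\<in>C. v \<in> e}" by (intro card_ge_0_finite) simp
  moreover have "{{v, a}, {v, b}, {v, c}} \<subseteq> {e\<in>C. v \<in> e}" using assms(2-4) by auto
  ultimately have "card {{v, a}, {v, b}, {v, c}} \<le> 2" using two card_mono by fastforce
  moreover have "card {{v, a}, {v, b}, {v, c}} = 3" using assms(5-7) by (simp add: doubleton_eq_iff)
  ultimately show False by simp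
qed

lemma wds_no_three_disks_on_edge:
  assumes "weak_disk_system G D" "e \<in> edges G"
    and "C1 \<in> D" "C2 \<in> D" "C3 \<in> D" "e \<in> C1" "e \<in> C2" "e \<in> C3"
    and "C1 \<noteq> C2" "C1 \<noteq> C3" "C2 \<noteq> C3"
  shows False
proof -
  have two: "card {C\<in>D. e \<in> C} = 2"
    using assms(1,2) unfolding weak_disk_system_def cycle_double_cover_def by auto
  then have "finite {C\<in>D. e \<in> C}" by (intro card_ge_0_finite) simp
  then have "card {C1, C2, C3} \<le> card {C\<in>D. e \<in> C}" by (rule card_mono) (use assms in auto)
  then show False using two assms(9-11) by simp
qed

text \<open>If no vertex has degree two, segments are single edges.  Hence two distinct disks
  sharing two vertices \<open>x, y\<close> meet in exactly \<open>{x, y}\<close>, which is an edge of both.\<close>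

lemma wds_two_common_vertices:
  assumes G: "ugraph G" "weak_disk_system G D" "\<forall>v\<in>verts G. deg G v \<noteq> 2"
    and C: "C \<in> D" "C' \<in> D" "C \<noteq> C'"
    and xy: "x \<noteq> y" "x \<in> dverts C" "y \<in> dverts C" "x \<in> dverts C'" "y \<in> dverts C'"
  shows "dverts C \<inter> dverts C' = {x, y} \<and> {x, y} \<in> C \<and> {x, y} \<in> C'"
proof -
  have fin: "finite (dverts C \<inter> dverts C')"
    using dverts_subset[OF G(1) wds_disk_edges[OF G(2) C(1)]] G(1) unfolding ugraph_def
    by (meson finite_Int finite_subset)
  have "card {x, y} \<le> card (dverts C \<inter> dverts C')" using xy fin by (intro card_mono) auto
  then have "card (dverts C \<inter> dverts C') \<ge> 2" using xy(1) by simp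
  then obtain p where p: "is_segment G p" "dverts C \<inter> dverts C' = set p" "C \<inter> C' = path_edges p"
    using G(2) C unfolding weak_disk_system_def by fastforce
  have pp: "is_path G p" and "\<forall>v\<in>interior p. deg G v = 2"
    using p(1) unfolding is_segment_def deg2_path_def by auto
  moreover have "set p \<subseteq> verts G" using pp unfolding is_path_def by simp
  then have "interior p \<subseteq> verts G" using interior_subset[of p] by blast
  ultimately have "interior p = {}" using G(3) by fastforce
  then have "length (butlast (tl p)) = 0" unfolding interior_def by simp
  then have "length p = 2" using pp unfolding is_path_def by simp
  then obtain a b where ab: "p = [a, b]"
    by (cases p; cases "tl p") auto
  have "{i. Suc i < length [a, b]} = {0}" by auto
  then have "path_edges [a, b] = {{a, b}}" unfolding path_edges_def by auto
  moreover have "{x, y} \<subseteq> {a, b}" using xy p(2) ab by auto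
  then have "{x, y} = {a, b}" using xy(1) by auto
  ultimately show ?thesis using p(2,3) ab by auto
qed

text \<open>A \<open>K\<^sub>4\<close> in a connected graph with at least five vertices has a vertex of degree at least four
  (otherwise its four vertices would form a whole component).\<close>

lemma K4_high_degree:
  assumes "ugraph G" "connected_graph G" "card (verts G) \<ge> 5"
    and K: "card K = 4" "\<forall>u\<in>K. \<forall>w\<in>K. u \<noteq> w \<longrightarrow> {u, w} \<in> edges G"
  shows "\<exists>v\<in>K. deg G v \<ge> 4"
proof (rule ccontr)
  assume low: "\<not> ?thesis"
  have KV: "K \<subseteq> verts G"
  proof
    fix u assume u: "u \<in> K"
    have "K \<noteq> {u}" using K(1) by auto
    then obtain w where "w \<in> K" "w \<noteq> u" using u by blast
    then have "{u, w} \<in> edges G" using K(2) u by force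
    then show "u \<in> verts G" using edge_subset_verts[OF assms(1)] by blast
  qed
  have "nbrs G v = K - {v}" if v: "v \<in> K" for v
  proof -
    have sub: "K - {v} \<subseteq> nbrs G v" using K(2) v unfolding nbrs_def by force
    have "card (K - {v}) = 3" using K(1) v by simp
    moreover have "card (nbrs G v) \<le> 3" using low v unfolding deg_def by auto
    ultimately show ?thesis
      using card_mono[OF nbrs_finite[OF assms(1)] sub] card_subset_eq[OF nbrs_finite[OF assms(1)] sub]
      by simp
  qed
  moreover obtain v where "v \<in> K" using K(1) by fastforce
  ultimately have "verts G \<subseteq> K" using connected_nbrs_closed[OF assms(2) _ KV] by blast
  then have "card (verts G) \<le> card K" using K(1) card_mono[of K] by fastforce
  then show False using assms(3) K(1) by simp
qed

text \<open>Splitting \<open>v\<close> is non-conforming as soon as two distinct disks both cross the partition at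
  \<open>v\<close> and share a further vertex: a conforming split needs the two crossing disks to meet only
  in \<open>v\<close>.\<close>

lemma crossing_disks_nonconforming:
  assumes "C \<in> D" "C' \<in> D" "C \<noteq> C'"
    and "{v, a} \<in> C" "{v, b} \<in> C" "a \<in> N1" "b \<in> N2"
    and "{v, a'} \<in> C'" "{v, b'} \<in> C'" "a' \<in> N1" "b' \<in> N2"
    and "w \<noteq> v" "w \<in> dverts C" "w \<in> dverts C'"
  shows "\<not> conforming_split G D v N1 N2"
proof
  assume "conforming_split G D v N1 N2"
  then obtain D1 D2 where D12: "D1 \<noteq> D2"
    "{C\<in>D. v \<in> dverts C \<and> (\<exists>a\<in>N1. \<exists>b\<in>N2. {v, a} \<in> C \<and> {v, b} \<in> C)} = {D1, D2}"
    "dverts D1 \<inter> dverts D2 = {v}" unfolding conforming_split_def by (elim exE conjE) iprover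
  have "C \<in> {C\<in>D. v \<in> dverts C \<and> (\<exists>a\<in>N1. \<exists>b\<in>N2. {v, a} \<in> C \<and> {v, b} \<in> C)}"
    using assms(1,4-7) in_dverts[OF assms(4)] by blast
  moreover have "C' \<in> {C\<in>D. v \<in> dverts C \<and> (\<exists>a\<in>N1. \<exists>b\<in>N2. {v, a} \<in> C \<and> {v, b} \<in> C)}"
    using assms(2,8-11) in_dverts[OF assms(8)] by blast
  ultimately have "C \<in> {D1, D2}" "C' \<in> {D1, D2}" unfolding D12(2) by blast+
  then have "dverts C \<inter> dverts C' = {v}" using assms(3) D12(3) by (auto simp: Int_commute)
  then show False using assms(12-14) by auto
qed

text \<open>A face of a \<open>K\<^sub>4\<close>: a set of vertices all of whose connecting edges lie on one disk.\<close>

definition face_disk :: "'a set set set \<Rightarrow> 'a set \<Rightarrow> bool" where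
  "face_disk D T \<longleftrightarrow> (\<exists>C\<in>D. \<forall>u\<in>T. \<forall>w\<in>T. u \<noteq> w \<longrightarrow> {u, w} \<in> C)"

lemma face_diskI:
  assumes "C \<in> D" "{x, y} \<in> C" "{x, z} \<in> C" "{y, z} \<in> C"
  shows "face_disk D {x, y, z}"
  unfolding face_disk_def using assms by (auto simp: insert_commute)

lemma card4_avoid:
  assumes "card K = 4"
  obtains t where "t \<in> K" "t \<notin> {x, y, z}"
proof -
  have "card {x, y, z} \<le> 3" by (simp add: card_insert_if)
  then have "\<not> K \<subseteq> {x, y, z}" using assms card_mono[of "{x, y, z}" K] by fastforce
  then show ?thesis using that by blast
qed

locale disk_graph =
  fixes G :: "'a ugr" and D :: "'a set set set"
  assumes ugraph: "ugraph G" and connected: "connected_graph G" and card_ge5: "card (verts G) \<ge> 5"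
    and no_deg2: "\<forall>v\<in>verts G. deg G v \<noteq> 2" and wds: "weak_disk_system G D"
begin

lemma disk_edge: "C \<in> D \<Longrightarrow> e \<in> C \<Longrightarrow> e \<in> edges G"
  using wds_disk_edges[OF wds] by blast

lemma two_common_vertices:
  assumes "C \<in> D" "C' \<in> D" "C \<noteq> C'" "x \<noteq> y" "x \<in> dverts C" "y \<in> dverts C"
    "x \<in> dverts C'" "y \<in> dverts C'"
  shows "dverts C \<inter> dverts C' = {x, y} \<and> {x, y} \<in> C \<and> {x, y} \<in> C'"
  using wds_two_common_vertices[OF ugraph wds no_deg2 assms] .

lemma no_three_disks_two_vertices:
  assumes "C1 \<in> D" "C2 \<in> D" "C3 \<in> D" "C1 \<noteq> C2" "C1 \<noteq> C3" "C2 \<noteq> C3"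
    and "x \<noteq> y" "x \<in> dverts C1" "y \<in> dverts C1" "x \<in> dverts C2" "y \<in> dverts C2"
    "x \<in> dverts C3" "y \<in> dverts C3"
  shows False
proof -
  have "{x, y} \<in> C1" "{x, y} \<in> C2" "{x, y} \<in> C3"
    using two_common_vertices[of C1 C2 x y] two_common_vertices[of C1 C3 x y] assms by auto
  then show False
    using wds_no_three_disks_on_edge[OF wds disk_edge[OF assms(1)] assms(1-3)] assms(4-6) by blast
qed

definition nonconforming_pair :: "'a \<Rightarrow> 'a \<Rightarrow> 'a \<Rightarrow> bool" where
  "nonconforming_pair v p q \<longleftrightarrow> p \<in> nbrs G v \<and> q \<in> nbrs G v \<and> p \<noteq> q \<and> deg G v \<ge> 4 \<and>
     \<not> conforming_split G D v (nbrs G v - {p, q}) {p, q}"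

lemma fan_disks_nonconforming:
  assumes "C1 \<in> D" "C2 \<in> D" "{v, r} \<in> C1" "{v, p} \<in> C1" "{v, r} \<in> C2" "{v, q} \<in> C2"
    and "r \<noteq> p" "r \<noteq> q" "p \<noteq> q"
  shows "\<not> conforming_split G D v (nbrs G v - {p, q}) {p, q}"
proof -
  have "C1 \<noteq> C2"
  proof
    assume "C1 = C2"
    moreover have "is_cycle G C1"
      using wds assms(1) unfolding weak_disk_system_def cycle_double_cover_def by blast
    ultimately show False using cycle_no_three_edges_at[of G C1 v r p q] assms by blast
  qed
  moreover have "r \<in> nbrs G v" "r \<noteq> v"
    using disk_edge[OF assms(1,3)] edge_not_singleton[OF ugraph] by (auto simp: nbrs_iff insert_commute)
  ultimately show ?thesis
    using crossing_disks_nonconforming[OF assms(1,2) _ assms(3,4) _ _ assms(5,6)] assms(7-9)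
      in_dverts[OF assms(3)] in_dverts[OF assms(5)] by auto
qed

lemma K4_nonconforming:
  assumes K: "card K = 4" and faces: "\<forall>t\<in>K. face_disk D (K - {t})"
  shows "\<exists>v\<in>K. \<forall>p\<in>K. \<forall>q\<in>K. p \<noteq> v \<longrightarrow> q \<noteq> v \<longrightarrow> p \<noteq> q \<longrightarrow> nonconforming_pair v p q"
proof -
  have face_edge: "\<exists>C\<in>D. {u, w} \<in> C \<and> {u, x} \<in> C"
    if "u \<in> K" "w \<in> K" "x \<in> K" "t \<in> K" "u \<noteq> w" "u \<noteq> x" "t \<notin> {u, w, x}" for u w x t
    using faces that unfolding face_disk_def by (metis DiffI insertCI singletonD)
  have adjacent: "\<forall>u\<in>K. \<forall>w\<in>K. u \<noteq> w \<longrightarrow> {u, w} \<in> edges G"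
  proof (intro ballI impI)
    fix u w assume uw: "u \<in> K" "w \<in> K" "u \<noteq> w"
    obtain t where "t \<in> K" "t \<notin> {u, w, w}" using card4_avoid[OF K] by blast
    then show "{u, w} \<in> edges G" using face_edge[of u w w t] uw disk_edge by blast
  qed
  obtain v where v: "v \<in> K" "deg G v \<ge> 4" using K4_high_degree[OF ugraph connected card_ge5 K adjacent]
    by blast
  have "nonconforming_pair v p q" if pq: "p \<in> K" "q \<in> K" "p \<noteq> v" "q \<noteq> v" "p \<noteq> q" for p q
  proof -
    obtain r where r: "r \<in> K" "r \<notin> {v, p, q}" using card4_avoid[OF K] by blast
    obtain C1 where "C1 \<in> D" "{v, r} \<in> C1" "{v, p} \<in> C1" using face_edge[of v r p q] pq r v by auto
    moreover obtain C2 where "C2 \<in> D" "{v, r} \<in> C2" "{v, q} \<in> C2"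
      using face_edge[of v r q p] pq r v by auto
    ultimately have "\<not> conforming_split G D v (nbrs G v - {p, q}) {p, q}"
      using fan_disks_nonconforming r pq by blast
    moreover have "p \<in> nbrs G v" "q \<in> nbrs G v" using adjacent pq v(1) by (auto simp: nbrs_iff)
    ultimately show ?thesis unfolding nonconforming_pair_def using v(2) pq by blast
  qed
  then show ?thesis using v(1) by blast
qed

lemma K4_faces:
  assumes "card {a, b, c, d} = 4"
    and "face_disk D {b, c, d}" "face_disk D {a, c, d}" "face_disk D {a, b, d}" "face_disk D {a, b, c}"
  shows "\<forall>t\<in>{a, b, c, d}. face_disk D ({a, b, c, d} - {t})"
proof -
  have "a \<noteq> b" "a \<noteq> c" "a \<noteq> d" "b \<noteq> c" "b \<noteq> d" "c \<noteq> d"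
    using assms(1) by (auto simp: card_insert_if split: if_splits)
  then have "{a, b, c, d} - {a} = {b, c, d}" "{a, b, c, d} - {b} = {a, c, d}"
    "{a, b, c, d} - {c} = {a, b, d}" "{a, b, c, d} - {d} = {a, b, c}" by auto
  then show ?thesis using assms(2-5) by auto
qed

end

section \<open>Locations and the combinatorial core\<close>

text \<open>An end of a triad path lies either on a branch vertex of the subdivision or in the interior
  of a segment.  We record this as its \<^emph>\<open>location\<close> in \<open>G\<close>: a singleton \<open>{v}\<close> or an edge.\<close>

definition is_location :: "'a ugr \<Rightarrow> 'a set \<Rightarrow> bool" where
  "is_location G l \<longleftrightarrow> (\<exists>v\<in>verts G. l = {v}) \<or> l \<in> edges G"

definition on_disk :: "'a set set \<Rightarrow> 'a set \<Rightarrow> bool" where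
  "on_disk C l \<longleftrightarrow> l \<in> C \<or> (\<exists>v. l = {v} \<and> v \<in> dverts C)"

definition triad_locations :: "'a set set set \<Rightarrow> 'a set \<Rightarrow> 'a set \<Rightarrow> 'a set \<Rightarrow> bool" where
  "triad_locations D l0 l1 l2 \<longleftrightarrow>
     (\<exists>C\<in>D. on_disk C l0 \<and> on_disk C l1) \<and> (\<exists>C\<in>D. on_disk C l0 \<and> on_disk C l2) \<and>
     (\<exists>C\<in>D. on_disk C l1 \<and> on_disk C l2) \<and> \<not> (\<exists>C\<in>D. on_disk C l0 \<and> on_disk C l1 \<and> on_disk C l2)"

lemma triad_locations_swap01: "triad_locations D l0 l1 l2 \<Longrightarrow> triad_locations D l1 l0 l2"
  unfolding triad_locations_def by blast

lemma triad_locations_swap12: "triad_locations D l0 l1 l2 \<Longrightarrow> triad_locations D l0 l2 l1"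
  unfolding triad_locations_def by blast

lemma triad_locations_distinct: "triad_locations D l0 l1 l2 \<Longrightarrow> l0 \<noteq> l1 \<and> l0 \<noteq> l2 \<and> l1 \<noteq> l2"
  unfolding triad_locations_def by blast

text \<open>How a triad path ending at location \<open>l\<close> is used in the minor.  Either (\<open>k = True\<close>) the segment
  of the edge \<open>l\<close> is cut at the end of the path, so the new vertex sees both ends of \<open>l\<close> but the
  edge \<open>l\<close> itself is lost; or the end is absorbed into the branch set of a vertex \<open>z \<in> l\<close>.
  \<open>attach\<close> lists the vertices the new vertex becomes adjacent to, \<open>removed\<close> the lost edges.\<close>

definition valid_choice :: "'a ugr \<Rightarrow> 'a set \<Rightarrow> bool \<Rightarrow> 'a \<Rightarrow> bool" where
  "valid_choice G l k z \<longleftrightarrow> (if k then l \<in> edges G else z \<in> l)"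

definition attach :: "'a set \<Rightarrow> bool \<Rightarrow> 'a \<Rightarrow> 'a set" where
  "attach l k z = (if k then l else {z})"

definition removed :: "'a set \<Rightarrow> bool \<Rightarrow> 'a set set" where
  "removed l k = (if k then {l} else {})"

lemma attach_subset_verts:
  "ugraph G \<Longrightarrow> is_location G l \<Longrightarrow> valid_choice G l k z \<Longrightarrow> attach l k z \<subseteq> verts G"
  unfolding valid_choice_def attach_def is_location_def
  by (auto split: if_splits dest: edge_subset_verts)

context disk_graph
begin

lemma on_disk_vertex: "C \<in> D \<Longrightarrow> on_disk C {v} \<longleftrightarrow> v \<in> dverts C"
  unfolding on_disk_def using disk_edge edge_not_singleton[OF ugraph] by blast

lemma on_disk_edge: "e \<in> edges G \<Longrightarrow> on_disk C e \<longleftrightarrow> e \<in> C"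
  unfolding on_disk_def using edge_not_singleton[OF ugraph] by blast

text \<open>What the choices must achieve: either no edge is lost and the new vertex sees three
  vertices not on a common disk (a weak 8-enlargement), or at most the edges \<open>vp, vq\<close> are lost
  and splitting \<open>v\<close> so as to separate \<open>{p, q}\<close> is non-conforming (a 3-enlargement).\<close>

definition enlargement_pattern :: "'a set \<Rightarrow> 'a set set \<Rightarrow> bool" where
  "enlargement_pattern A R \<longleftrightarrow>
    (R = {} \<and> (\<exists>x1 x2 x3. x1 \<in> A \<and> x2 \<in> A \<and> x3 \<in> A \<and> x1 \<noteq> x2 \<and> x1 \<noteq> x3 \<and> x2 \<noteq> x3 \<and>
        \<not> (\<exists>C\<in>D. {x1, x2, x3} \<subseteq> dverts C))) \<or>
    (\<exists>v p q. v \<in> A \<and> p \<in> A \<and> q \<in> A \<and> nonconforming_pair v p q \<and> R \<subseteq> {{v, p}, {v, q}})"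

definition resolvable :: "'a set \<Rightarrow> 'a set \<Rightarrow> 'a set \<Rightarrow> bool" where
  "resolvable l0 l1 l2 \<longleftrightarrow> (\<exists>k0 z0 k1 z1 k2 z2.
     valid_choice G l0 k0 z0 \<and> valid_choice G l1 k1 z1 \<and> valid_choice G l2 k2 z2 \<and>
     enlargement_pattern (attach l0 k0 z0 \<union> attach l1 k1 z1 \<union> attach l2 k2 z2)
       (removed l0 k0 \<union> removed l1 k1 \<union> removed l2 k2))"

lemma resolvable_swap01: "resolvable l0 l1 l2 \<Longrightarrow> resolvable l1 l0 l2"
  unfolding resolvable_def
  by (elim exE conjE, intro exI conjI) (assumption | simp add: Un_ac)+

lemma resolvable_swap12: "resolvable l0 l1 l2 \<Longrightarrow> resolvable l0 l2 l1"
  unfolding resolvable_def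
  by (elim exE conjE, intro exI conjI) (assumption | simp add: Un_ac)+

lemma resolvable_by_triple:
  assumes "z0 \<in> l0" "z1 \<in> l1" "z2 \<in> l2" "z0 \<noteq> z1" "z0 \<noteq> z2" "z1 \<noteq> z2"
    and "\<not> (\<exists>C\<in>D. {z0, z1, z2} \<subseteq> dverts C)"
  shows "resolvable l0 l1 l2"
  unfolding resolvable_def
proof (intro exI conjI)
  show "valid_choice G l0 False z0" "valid_choice G l1 False z1" "valid_choice G l2 False z2"
    using assms unfolding valid_choice_def by auto
  show "enlargement_pattern (attach l0 False z0 \<union> attach l1 False z1 \<union> attach l2 False z2)
     (removed l0 False \<union> removed l1 False \<union> removed l2 False)"
    unfolding enlargement_pattern_def attach_def removed_def
    by (rule disjI1, intro conjI exI[of _ z0] exI[of _ z1] exI[of _ z2]) (use assms in simp_all)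
qed

lemma resolvable_by_split:
  assumes "valid_choice G l0 k0 z0" "valid_choice G l1 k1 z1" "valid_choice G l2 k2 z2"
    and "{v, p, q} \<subseteq> attach l0 k0 z0 \<union> attach l1 k1 z1 \<union> attach l2 k2 z2"
    and "removed l0 k0 \<union> removed l1 k1 \<union> removed l2 k2 \<subseteq> {{v, p}, {v, q}}"
    and "nonconforming_pair v p q"
  shows "resolvable l0 l1 l2"
proof -
  have "enlargement_pattern (attach l0 k0 z0 \<union> attach l1 k1 z1 \<union> attach l2 k2 z2)
     (removed l0 k0 \<union> removed l1 k1 \<union> removed l2 k2)"
    unfolding enlargement_pattern_def
    by (rule disjI2, intro conjI exI[of _ v] exI[of _ p] exI[of _ q]) (use assms(4-6) in simp_all)
  then show ?thesis unfolding resolvable_def using assms(1-3) by blast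
qed

end

context disk_graph
begin

text \<open>If a disk \<open>Y\<close> contains \<open>x, y\<close> and a disk \<open>Z\<close> contains \<open>x, z, z'\<close>, where \<open>y \<notin> Z\<close> and
  \<open>z, z' \<notin> Y\<close>, then \<open>{x, y, z}\<close> and \<open>{x, y, z'}\<close> cannot both lie on disks: the two disks together
  with \<open>Y\<close> would be three disks through \<open>x, y\<close>.\<close>

lemma triples_on_disks_conflict:
  assumes "x \<noteq> y" "z \<noteq> z'" "x \<noteq> z" "x \<noteq> z'" "Y \<in> D" "Z \<in> D"
    "x \<in> dverts Y" "y \<in> dverts Y" "x \<in> dverts Z" "z \<in> dverts Z" "z' \<in> dverts Z"
    "y \<notin> dverts Z" "z \<notin> dverts Y" "z' \<notin> dverts Y"
    "D1 \<in> D" "{x, y, z} \<subseteq> dverts D1" "D2 \<in> D" "{x, y, z'} \<subseteq> dverts D2"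
  shows False
proof -
  have "D1 \<noteq> D2"
  proof
    assume same: "D1 = D2"
    have "D1 \<noteq> Z" using assms(12,16) by auto
    then have "dverts D1 \<inter> dverts Z = {x, z}"
      using two_common_vertices[OF assms(15,6) _ assms(3)] assms(9,10,16) by auto
    then show False using same assms(2,4,11,18) by auto
  qed
  moreover have "D1 \<noteq> Y" "D2 \<noteq> Y" using assms(13,14,16,18) by auto
  ultimately show False
    using no_three_disks_two_vertices[OF assms(15,17,5) _ _ _ assms(1)] assms(7,8,16,18) by auto
qed

lemma resolvable_vertices:
  assumes "triad_locations D {u0} {u1} {u2}"
  shows "resolvable {u0} {u1} {u2}"
proof -
  have "\<exists>C\<in>D. u0 \<in> dverts C \<and> u1 \<in> dverts C" "\<exists>C\<in>D. u0 \<in> dverts C \<and> u2 \<in> dverts C"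
    "\<exists>C\<in>D. u1 \<in> dverts C \<and> u2 \<in> dverts C"
    "\<not> (\<exists>C\<in>D. u0 \<in> dverts C \<and> u1 \<in> dverts C \<and> u2 \<in> dverts C)"
    using assms unfolding triad_locations_def by (auto simp: on_disk_vertex)
  then show ?thesis by (intro resolvable_by_triple[of u0 _ u1 _ u2]) blast+
qed

lemma edge_vertices_disks:
  assumes ab: "{a, b} \<in> edges G" and triad: "triad_locations D {a, b} {u} {w}"
  obtains Cu Cw where "Cu \<in> D" "{a, b} \<in> Cu" "u \<in> dverts Cu" "w \<notin> dverts Cu"
    "Cw \<in> D" "{a, b} \<in> Cw" "w \<in> dverts Cw" "u \<notin> dverts Cw"
    "u \<noteq> a" "u \<noteq> b" "w \<noteq> a" "w \<noteq> b" "u \<noteq> w"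
proof -
  have P: "\<exists>C\<in>D. {a, b} \<in> C \<and> u \<in> dverts C" "\<exists>C\<in>D. {a, b} \<in> C \<and> w \<in> dverts C"
    "\<not> (\<exists>C\<in>D. {a, b} \<in> C \<and> u \<in> dverts C \<and> w \<in> dverts C)"
    using triad unfolding triad_locations_def by (auto simp: on_disk_vertex on_disk_edge[OF ab])
  obtain Cu where Cu: "Cu \<in> D" "{a, b} \<in> Cu" "u \<in> dverts Cu" using P(1) by blast
  obtain Cw where Cw: "Cw \<in> D" "{a, b} \<in> Cw" "w \<in> dverts Cw" using P(2) by blast
  have wCu: "w \<notin> dverts Cu" and uCw: "u \<notin> dverts Cw" using P(3) Cu Cw by blast+
  have "a \<in> dverts Cu" "b \<in> dverts Cu" "a \<in> dverts Cw" "b \<in> dverts Cw"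
    using in_dverts[OF Cu(2)] in_dverts[OF Cw(2)] by auto
  then have "u \<noteq> a" "u \<noteq> b" "w \<noteq> a" "w \<noteq> b" "u \<noteq> w" using wCu uCw Cu(3) by auto
  then show ?thesis by (rule that[OF Cu wCu Cw uCw])
qed

lemma edge_vertices_K4:
  assumes ab: "{a, b} \<in> edges G" "a \<noteq> b" and triad: "triad_locations D {a, b} {u} {w}"
    and D3: "D3 \<in> D" "{a, u, w} \<subseteq> dverts D3" and D4: "D4 \<in> D" "{b, u, w} \<subseteq> dverts D4"
  shows "card {a, b, u, w} = 4 \<and> (\<forall>t\<in>{a, b, u, w}. face_disk D ({a, b, u, w} - {t}))"
proof -
  obtain Cu Cw where Cu: "Cu \<in> D" "{a, b} \<in> Cu" "u \<in> dverts Cu" "w \<notin> dverts Cu"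
    and Cw: "Cw \<in> D" "{a, b} \<in> Cw" "w \<in> dverts Cw" "u \<notin> dverts Cw"
    and d: "u \<noteq> a" "u \<noteq> b" "w \<noteq> a" "w \<noteq> b" "u \<noteq> w"
    using edge_vertices_disks[OF ab(1) triad] by blast
  have abCu: "a \<in> dverts Cu" "b \<in> dverts Cu" using in_dverts[OF Cu(2)] by auto
  have abCw: "a \<in> dverts Cw" "b \<in> dverts Cw" using in_dverts[OF Cw(2)] by auto
  have D3': "a \<in> dverts D3" "u \<in> dverts D3" "w \<in> dverts D3" using D3(2) by auto
  have D4': "b \<in> dverts D4" "u \<in> dverts D4" "w \<in> dverts D4" using D4(2) by auto
  have n: "Cu \<noteq> D3" "Cw \<noteq> D3" "Cu \<noteq> D4" "Cw \<noteq> D4" using D3' D4' Cu(4) Cw(4) by auto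
  have W1: "dverts Cu \<inter> dverts D3 = {a, u}" "{a, u} \<in> Cu" "{a, u} \<in> D3"
    using two_common_vertices[OF Cu(1) D3(1) n(1)] d abCu Cu(3) D3' by auto
  have W2: "{a, w} \<in> Cw" "{a, w} \<in> D3"
    using two_common_vertices[OF Cw(1) D3(1) n(2)] d abCw Cw(3) D3' by auto
  have W3: "{b, u} \<in> Cu" "{b, u} \<in> D4"
    using two_common_vertices[OF Cu(1) D4(1) n(3)] d abCu Cu(3) D4' by auto
  have W4: "{b, w} \<in> Cw" "{b, w} \<in> D4"
    using two_common_vertices[OF Cw(1) D4(1) n(4)] d abCw Cw(3) D4' by auto
  have "b \<notin> dverts D3" using W1(1) abCu(2) ab(2) d(2) by auto
  then have "D3 \<noteq> D4" using D4'(1) by blast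
  then have W5: "{u, w} \<in> D3" "{u, w} \<in> D4"
    using two_common_vertices[OF D3(1) D4(1) _ d(5) D3'(2,3) D4'(2,3)] by blast+
  have K: "card {a, b, u, w} = 4" using ab(2) d by simp
  show ?thesis
    using K K4_faces[OF K face_diskI[OF D4(1) W3(2) W4(2) W5(2)] face_diskI[OF D3(1) W1(3) W2(2) W5(1)]
        face_diskI[OF Cw(1,2) W2(1) W4(1)] face_diskI[OF Cu(1,2) W1(2) W3(1)]] by blast
qed

text \<open>Resolution of an edge location and two vertex locations: either a triple gives a weak
  8-enlargement, or the \<open>K\<^sub>4\<close> above gives a non-conforming split at one of its vertices.\<close>

lemma resolvable_edge_vertices:
  assumes ab: "{a, b} \<in> edges G" "a \<noteq> b"
    and triad: "triad_locations D {a, b} {u} {w}"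
  shows "resolvable {a, b} {u} {w}"
proof -
  have d: "u \<noteq> a" "u \<noteq> b" "w \<noteq> a" "w \<noteq> b" "u \<noteq> w"
    using edge_vertices_disks[OF ab(1) triad] by blast+
  show ?thesis
  proof (cases "(\<exists>C\<in>D. {a, u, w} \<subseteq> dverts C) \<and> (\<exists>C\<in>D. {b, u, w} \<subseteq> dverts C)")
    case False
    then consider (a) "\<not> (\<exists>C\<in>D. {a, u, w} \<subseteq> dverts C)" | (b) "\<not> (\<exists>C\<in>D. {b, u, w} \<subseteq> dverts C)"
      by blast
    then show ?thesis
    proof cases
      case a show ?thesis by (rule resolvable_by_triple[OF _ _ _ _ _ _ a]) (use d in auto)
    next
      case b show ?thesis by (rule resolvable_by_triple[OF _ _ _ _ _ _ b]) (use d in auto)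
    qed
  next
    case True
    then obtain D3 D4 where "D3 \<in> D" "{a, u, w} \<subseteq> dverts D3" "D4 \<in> D" "{b, u, w} \<subseteq> dverts D4"
      by blast
    then have K: "card {a, b, u, w} = 4" "\<forall>t\<in>{a, b, u, w}. face_disk D ({a, b, u, w} - {t})"
      using edge_vertices_K4[OF ab triad] by blast+
    obtain v where v: "v \<in> {a, b, u, w}"
      and nc: "\<forall>p\<in>{a, b, u, w}. \<forall>q\<in>{a, b, u, w}. p \<noteq> v \<longrightarrow> q \<noteq> v \<longrightarrow> p \<noteq> q \<longrightarrow>
        nonconforming_pair v p q"
      using K4_nonconforming[OF K] by blast
    have choice: "valid_choice G {a, b} True a" "valid_choice G {a, b} False a"
      "valid_choice G {u} False u" "valid_choice G {w} False w"
      using ab unfolding valid_choice_def by auto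
    show ?thesis using v
    proof (elim insertE emptyE)
      assume "v = a"
      then have pair: "nonconforming_pair a b u" using nc[rule_format, of b u] ab(2) d by simp
      show ?thesis by (intro resolvable_by_split[OF choice(1,3,4) _ _ pair])
          (auto simp: attach_def removed_def)
    next
      assume "v = b"
      then have pair: "nonconforming_pair b a u" using nc[rule_format, of a u] ab(2) d by simp
      show ?thesis by (intro resolvable_by_split[OF choice(1,3,4) _ _ pair])
          (auto simp: attach_def removed_def insert_commute)
    next
      assume "v = u"
      then have pair: "nonconforming_pair u a w" using nc[rule_format, of a w] ab(2) d by simp
      show ?thesis by (intro resolvable_by_split[OF choice(2,3,4) _ _ pair])
          (auto simp: attach_def removed_def)
    next
      assume "v = w"
      then have pair: "nonconforming_pair w a u" using nc[rule_format, of a u] ab(2) d by simp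
      show ?thesis by (intro resolvable_by_split[OF choice(2,3,4) _ _ pair])
          (auto simp: attach_def removed_def)
    qed
  qed
qed

end

context disk_graph
begin

lemma disks_sharing_edge:
  assumes "C \<in> D" "C' \<in> D" "C \<noteq> C'" "e \<in> edges G" "e \<subseteq> dverts C" "e \<subseteq> dverts C'"
  shows "dverts C \<inter> dverts C' = e"
proof -
  obtain x y where xy: "e = {x, y}" "x \<noteq> y" using ugraph_edge[OF ugraph assms(4)] by blast
  show ?thesis using two_common_vertices[OF assms(1-3) xy(2)] assms(5,6) xy(1) by auto
qed

lemma adjacent_edges_vertex_disks:
  assumes ab: "{a, b} \<in> edges G" "a \<noteq> b" and ad: "{a, d} \<in> edges G" "a \<noteq> d" and bd: "b \<noteq> d"
    and triad: "triad_locations D {a, b} {a, d} {u}"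
  obtains X Y1 Y2 where "X \<in> D" "{a, b} \<in> X" "{a, d} \<in> X" "u \<notin> dverts X"
    "Y1 \<in> D" "{a, b} \<in> Y1" "u \<in> dverts Y1" "d \<notin> dverts Y1"
    "Y2 \<in> D" "{a, d} \<in> Y2" "u \<in> dverts Y2" "b \<notin> dverts Y2"
    "u \<noteq> a" "u \<noteq> b" "u \<noteq> d"
proof -
  have P: "\<exists>C\<in>D. {a, b} \<in> C \<and> {a, d} \<in> C" "\<exists>C\<in>D. {a, b} \<in> C \<and> u \<in> dverts C"
    "\<exists>C\<in>D. {a, d} \<in> C \<and> u \<in> dverts C"
    "\<not> (\<exists>C\<in>D. {a, b} \<in> C \<and> {a, d} \<in> C \<and> u \<in> dverts C)"
    using triad unfolding triad_locations_def
    by (auto simp: on_disk_vertex on_disk_edge[OF ab(1)] on_disk_edge[OF ad(1)])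
  obtain X where X: "X \<in> D" "{a, b} \<in> X" "{a, d} \<in> X" using P(1) by blast
  obtain Y1 where Y1: "Y1 \<in> D" "{a, b} \<in> Y1" "u \<in> dverts Y1" using P(2) by blast
  obtain Y2 where Y2: "Y2 \<in> D" "{a, d} \<in> Y2" "u \<in> dverts Y2" using P(3) by blast
  have uX: "u \<notin> dverts X" using P(4) X by blast
  have n: "X \<noteq> Y1" "X \<noteq> Y2" using uX Y1 Y2 by auto
  have vX: "a \<in> dverts X" "b \<in> dverts X" "d \<in> dverts X"
    using in_dverts[OF X(2)] in_dverts[OF X(3)] by auto
  have "dverts X \<inter> dverts Y1 = {a, b}"
    using two_common_vertices[OF X(1) Y1(1) n(1) ab(2)] vX in_dverts[OF Y1(2)] by blast
  then have "d \<notin> dverts Y1" using vX(3) ad(2) bd by auto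
  moreover have "dverts X \<inter> dverts Y2 = {a, d}"
    using two_common_vertices[OF X(1) Y2(1) n(2) ad(2)] vX in_dverts[OF Y2(2)] by blast
  then have "b \<notin> dverts Y2" using vX(2) ab(2) bd by auto
  moreover have "u \<noteq> a" "u \<noteq> b" "u \<noteq> d" using uX vX by auto
  ultimately show ?thesis using that[OF X uX Y1] Y2 by blast
qed

lemma adjacent_edges_vertex_K4:
  assumes ab: "{a, b} \<in> edges G" "a \<noteq> b" and ad: "{a, d} \<in> edges G" "a \<noteq> d" and bd: "b \<noteq> d"
    and triad: "triad_locations D {a, b} {a, d} {u}"
    and Dd: "Dd \<in> D" "{b, d, u} \<subseteq> dverts Dd"
  shows "card {a, b, d, u} = 4 \<and> (\<forall>t\<in>{a, b, d, u}. face_disk D ({a, b, d, u} - {t}))"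
proof -
  obtain X Y1 Y2 where X: "X \<in> D" "{a, b} \<in> X" "{a, d} \<in> X" "u \<notin> dverts X"
    and Y1: "Y1 \<in> D" "{a, b} \<in> Y1" "u \<in> dverts Y1" "d \<notin> dverts Y1"
    and Y2: "Y2 \<in> D" "{a, d} \<in> Y2" "u \<in> dverts Y2" "b \<notin> dverts Y2"
    and du: "u \<noteq> a" "u \<noteq> b" "u \<noteq> d"
    using adjacent_edges_vertex_disks[OF ab ad bd triad] by blast
  have vX: "b \<in> dverts X" "d \<in> dverts X" using in_dverts[OF X(2)] in_dverts[OF X(3)] by auto
  have vY1: "a \<in> dverts Y1" "b \<in> dverts Y1" using in_dverts[OF Y1(2)] by auto
  have vY2: "a \<in> dverts Y2" "d \<in> dverts Y2" using in_dverts[OF Y2(2)] by auto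
  have vD: "b \<in> dverts Dd" "d \<in> dverts Dd" "u \<in> dverts Dd" using Dd(2) by auto
  have m: "Dd \<noteq> X" "Dd \<noteq> Y1" "Dd \<noteq> Y2" using X(4) Y1(4) Y2(4) vD by auto
  have W1: "{b, d} \<in> Dd" "{b, d} \<in> X"
    using two_common_vertices[OF Dd(1) X(1) m(1) bd] vD vX by auto
  have W2: "{b, u} \<in> Dd" "{b, u} \<in> Y1"
    using two_common_vertices[OF Dd(1) Y1(1) m(2)] vD vY1 Y1(3) du by auto
  have W3: "{d, u} \<in> Dd" "{d, u} \<in> Y2"
    using two_common_vertices[OF Dd(1) Y2(1) m(3)] vD vY2 Y2(3) du by auto
  have "Y1 \<noteq> Y2" using Y1(4) vY2(2) by blast
  then have W4: "{a, u} \<in> Y1" "{a, u} \<in> Y2"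
    using two_common_vertices[OF Y1(1) Y2(1)] vY1 vY2 Y1(3) Y2(3) du by auto
  have K: "card {a, b, d, u} = 4" using ab(2) ad(2) bd du by simp
  show ?thesis
    using K K4_faces[OF K face_diskI[OF Dd(1) W1(1) W2(1) W3(1)] face_diskI[OF Y2(1,2) W4(2) W3(2)]
        face_diskI[OF Y1(1,2) W4(1) W2(2)] face_diskI[OF X(1,2,3) W1(2)]] by blast
qed

lemma resolvable_adjacent_edges_vertex:
  assumes ab: "{a, b} \<in> edges G" "a \<noteq> b" and ad: "{a, d} \<in> edges G" "a \<noteq> d" and bd: "b \<noteq> d"
    and triad: "triad_locations D {a, b} {a, d} {u}"
  shows "resolvable {a, b} {a, d} {u}"
proof -
  have du: "u \<noteq> a" "u \<noteq> b" "u \<noteq> d" using adjacent_edges_vertex_disks[OF ab ad bd triad] by blast+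
  show ?thesis
  proof (cases "\<exists>C\<in>D. {b, d, u} \<subseteq> dverts C")
    case False
    then show ?thesis by (intro resolvable_by_triple[of b _ d _ u]) (use du bd in auto)
  next
    case True
    then have K: "card {a, b, d, u} = 4" "\<forall>t\<in>{a, b, d, u}. face_disk D ({a, b, d, u} - {t})"
      using adjacent_edges_vertex_K4[OF ab ad bd triad] by blast+
    obtain v where v: "v \<in> {a, b, d, u}"
      and nc: "\<forall>p\<in>{a, b, d, u}. \<forall>q\<in>{a, b, d, u}. p \<noteq> v \<longrightarrow> q \<noteq> v \<longrightarrow> p \<noteq> q \<longrightarrow>
        nonconforming_pair v p q"
      using K4_nonconforming[OF K] by blast
    have choice: "valid_choice G {a, b} True a" "valid_choice G {a, b} False b"
      "valid_choice G {a, d} True d" "valid_choice G {a, d} False d" "valid_choice G {u} False u"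
      using ab ad unfolding valid_choice_def by auto
    show ?thesis using v
    proof (elim insertE emptyE)
      assume "v = a"
      then have pair: "nonconforming_pair a b u" using nc[rule_format, of b u] ab(2) du by simp
      show ?thesis by (intro resolvable_by_split[OF choice(1,4,5) _ _ pair])
          (auto simp: attach_def removed_def)
    next
      assume "v = b"
      then have pair: "nonconforming_pair b a u" using nc[rule_format, of a u] ab(2) du by simp
      show ?thesis by (intro resolvable_by_split[OF choice(1,4,5) _ _ pair])
          (auto simp: attach_def removed_def insert_commute)
    next
      assume "v = d"
      then have pair: "nonconforming_pair d a u" using nc[rule_format, of a u] ad(2) du by simp
      show ?thesis by (intro resolvable_by_split[OF choice(2,3,5) _ _ pair])
          (auto simp: attach_def removed_def insert_commute)
    next
      assume "v = u"
      then have pair: "nonconforming_pair u b d" using nc[rule_format, of b d] bd du by simp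
      show ?thesis by (intro resolvable_by_split[OF choice(2,4,5) _ _ pair])
          (auto simp: attach_def removed_def)
    qed
  qed
qed

end

context disk_graph
begin

text \<open>Two disjoint edge locations and a vertex location: the triad configuration is impossible
  unless a triple gives a weak 8-enlargement.\<close>

lemma resolvable_disjoint_edges_vertex:
  assumes e1: "e1 \<in> edges G" and e2: "e2 \<in> edges G" and disj: "e1 \<inter> e2 = {}"
    and triad: "triad_locations D e1 e2 {u}"
  shows "resolvable e1 e2 {u}"
proof -
  obtain a b where ab: "e1 = {a, b}" "a \<noteq> b" using ugraph_edge[OF ugraph e1] by blast
  obtain c d where cd: "e2 = {c, d}" "c \<noteq> d" using ugraph_edge[OF ugraph e2] by blast
  have P: "\<exists>C\<in>D. e1 \<in> C \<and> e2 \<in> C" "\<exists>C\<in>D. e1 \<in> C \<and> u \<in> dverts C"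
    "\<not> (\<exists>C\<in>D. e1 \<in> C \<and> e2 \<in> C \<and> u \<in> dverts C)"
    using triad unfolding triad_locations_def
    by (auto simp: on_disk_vertex on_disk_edge[OF e1] on_disk_edge[OF e2])
  obtain X where X: "X \<in> D" "e1 \<in> X" "e2 \<in> X" using P(1) by blast
  obtain Y where Y: "Y \<in> D" "e1 \<in> Y" "u \<in> dverts Y" using P(2) by blast
  have uX: "u \<notin> dverts X" using P(3) X by blast
  have vX: "a \<in> dverts X" "c \<in> dverts X" "d \<in> dverts X"
    using in_dverts[OF X(2)] in_dverts[OF X(3)] ab cd by auto
  have vY: "a \<in> dverts Y" using in_dverts[OF Y(2)] ab by auto
  have "dverts X \<inter> dverts Y = e1"
    using disks_sharing_edge[OF X(1) Y(1) _ e1] in_dverts[OF X(2)] in_dverts[OF Y(2)] uX Y(3) by blast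
  then have cdY: "c \<notin> dverts Y" "d \<notin> dverts Y" using vX disj cd by auto
  have dist: "u \<noteq> a" "a \<noteq> c" "a \<noteq> d" "u \<noteq> c" "u \<noteq> d" using uX vX disj ab cd by auto
  show ?thesis
  proof (cases "(\<exists>C\<in>D. {a, u, c} \<subseteq> dverts C) \<and> (\<exists>C\<in>D. {a, u, d} \<subseteq> dverts C)")
    case True
    then obtain D1 D2 where "D1 \<in> D" "{a, u, c} \<subseteq> dverts D1" "D2 \<in> D" "{a, u, d} \<subseteq> dverts D2"
      by blast
    then show ?thesis
      using triples_on_disks_conflict[OF dist(1)[symmetric] cd(2) dist(2,3) Y(1) X(1) vY Y(3) vX uX cdY]
      by blast
  next
    case False
    then consider (c) "\<not> (\<exists>C\<in>D. {a, c, u} \<subseteq> dverts C)" | (d) "\<not> (\<exists>C\<in>D. {a, d, u} \<subseteq> dverts C)"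
      by (auto simp: insert_commute)
    then show ?thesis
    proof cases
      case c show ?thesis by (rule resolvable_by_triple[OF _ _ _ _ _ _ c]) (use ab cd dist in auto)
    next
      case d show ?thesis by (rule resolvable_by_triple[OF _ _ _ _ _ _ d]) (use ab cd dist in auto)
    qed
  qed
qed

lemma resolvable_edges_vertex:
  assumes e1: "e1 \<in> edges G" and e2: "e2 \<in> edges G" and triad: "triad_locations D e1 e2 {u}"
  shows "resolvable e1 e2 {u}"
proof (cases "e1 \<inter> e2 = {}")
  case False
  then obtain a where a: "a \<in> e1" "a \<in> e2" by blast
  obtain b where ab: "e1 = {a, b}" "a \<noteq> b" using ugraph_edge_other_end[OF ugraph e1 a(1)] by blast
  obtain d where ad: "e2 = {a, d}" "a \<noteq> d" using ugraph_edge_other_end[OF ugraph e2 a(2)] by blast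
  have "b \<noteq> d" using triad_locations_distinct[OF triad] ab ad by auto
  then show ?thesis
    using resolvable_adjacent_edges_vertex[of a b d u] e1 e2 ab ad triad by simp
qed (use resolvable_disjoint_edges_vertex e1 e2 triad in blast)

lemma three_edges_disks:
  assumes e1: "e1 \<in> edges G" and e2: "e2 \<in> edges G" and e3: "e3 \<in> edges G"
    and triad: "triad_locations D e1 e2 e3"
  obtains X12 X13 X23 where "X12 \<in> D" "X13 \<in> D" "X23 \<in> D"
    "e1 \<subseteq> dverts X12" "e2 \<subseteq> dverts X12" "e1 \<subseteq> dverts X13" "e3 \<subseteq> dverts X13"
    "e2 \<subseteq> dverts X23" "e3 \<subseteq> dverts X23"
    "e1 \<in> X12" "e2 \<in> X12" "e1 \<in> X13" "e3 \<in> X13" "e2 \<in> X23" "e3 \<in> X23"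
    "dverts X12 \<inter> dverts X13 = e1" "dverts X12 \<inter> dverts X23 = e2" "dverts X13 \<inter> dverts X23 = e3"
proof -
  have P: "\<exists>C\<in>D. e1 \<in> C \<and> e2 \<in> C" "\<exists>C\<in>D. e1 \<in> C \<and> e3 \<in> C"
    "\<exists>C\<in>D. e2 \<in> C \<and> e3 \<in> C" "\<not> (\<exists>C\<in>D. e1 \<in> C \<and> e2 \<in> C \<and> e3 \<in> C)"
    using triad unfolding triad_locations_def
    by (auto simp: on_disk_edge[OF e1] on_disk_edge[OF e2] on_disk_edge[OF e3])
  obtain X12 where X12: "X12 \<in> D" "e1 \<in> X12" "e2 \<in> X12" using P(1) by blast
  obtain X13 where X13: "X13 \<in> D" "e1 \<in> X13" "e3 \<in> X13" using P(2) by blast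
  obtain X23 where X23: "X23 \<in> D" "e2 \<in> X23" "e3 \<in> X23" using P(3) by blast
  have n: "X12 \<noteq> X13" "X12 \<noteq> X23" "X13 \<noteq> X23" using P(4) X12 X13 X23 by blast+
  have sub: "e1 \<subseteq> dverts X12" "e2 \<subseteq> dverts X12" "e1 \<subseteq> dverts X13" "e3 \<subseteq> dverts X13"
    "e2 \<subseteq> dverts X23" "e3 \<subseteq> dverts X23"
    using in_dverts[OF X12(2)] in_dverts[OF X12(3)] in_dverts[OF X13(2)] in_dverts[OF X13(3)]
      in_dverts[OF X23(2)] in_dverts[OF X23(3)] by blast+
  show ?thesis
  proof (rule that[OF X12(1) X13(1) X23(1) sub X12(2,3) X13(2,3) X23(2,3)])
    show "dverts X12 \<inter> dverts X13 = e1" using disks_sharing_edge[OF X12(1) X13(1) n(1) e1] sub by blast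
    show "dverts X12 \<inter> dverts X23 = e2" using disks_sharing_edge[OF X12(1) X23(1) n(2) e2] sub by blast
    show "dverts X13 \<inter> dverts X23 = e3" using disks_sharing_edge[OF X13(1) X23(1) n(3) e3] sub by blast
  qed
qed

text \<open>Three edge locations, one of them disjoint from the other two: impossible unless a triple
  gives a weak 8-enlargement.\<close>

lemma resolvable_edges_one_disjoint:
  assumes e1: "e1 \<in> edges G" and e2: "e2 \<in> edges G" and e3: "e3 \<in> edges G"
    and triad: "triad_locations D e1 e2 e3" and disj: "e3 \<inter> (e1 \<union> e2) = {}"
  shows "resolvable e1 e2 e3"
proof -
  obtain X12 X13 where X: "X12 \<in> D" "X13 \<in> D" "e1 \<subseteq> dverts X12" "e2 \<subseteq> dverts X12"
      "e1 \<subseteq> dverts X13" "e3 \<subseteq> dverts X13" "dverts X12 \<inter> dverts X13 = e1"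
    using three_edges_disks[OF e1 e2 e3 triad] by metis
  obtain a b where ab: "e1 = {a, b}" "a \<noteq> b" using ugraph_edge[OF ugraph e1] by blast
  obtain f g where fg: "e3 = {f, g}" "f \<noteq> g" using ugraph_edge[OF ugraph e3] by blast
  obtain y where y: "y \<in> e2" "y \<notin> e1"
  proof -
    obtain c d where "e2 = {c, d}" "c \<noteq> d" using ugraph_edge[OF ugraph e2] by blast
    then have "\<not> e2 \<subseteq> e1" using ab triad_locations_distinct[OF triad] by auto
    then show ?thesis using that by blast
  qed
  have yX13: "y \<notin> dverts X13" using X y by auto
  have fgX12: "f \<notin> dverts X12" "g \<notin> dverts X12" using X fg disj by auto
  have dist: "a \<noteq> y" "a \<noteq> f" "a \<noteq> g" "y \<noteq> f" "y \<noteq> g" using y ab fg disj by auto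
  have vX: "a \<in> dverts X12" "y \<in> dverts X12" "a \<in> dverts X13" "f \<in> dverts X13" "g \<in> dverts X13"
    using X ab y fg by auto
  show ?thesis
  proof (cases "(\<exists>C\<in>D. {a, y, f} \<subseteq> dverts C) \<and> (\<exists>C\<in>D. {a, y, g} \<subseteq> dverts C)")
    case True
    then obtain D1 D2 where "D1 \<in> D" "{a, y, f} \<subseteq> dverts D1" "D2 \<in> D" "{a, y, g} \<subseteq> dverts D2"
      by blast
    then show ?thesis
      using triples_on_disks_conflict[OF dist(1) fg(2) dist(2,3) X(1,2) vX yX13 fgX12] by blast
  next
    case False
    then consider (f) "\<not> (\<exists>C\<in>D. {a, y, f} \<subseteq> dverts C)" | (g) "\<not> (\<exists>C\<in>D. {a, y, g} \<subseteq> dverts C)"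
      by blast
    then show ?thesis
    proof cases
      case f show ?thesis by (rule resolvable_by_triple[OF _ _ _ _ _ _ f]) (use ab y fg dist in auto)
    next
      case g show ?thesis by (rule resolvable_by_triple[OF _ _ _ _ _ _ g]) (use ab y fg dist in auto)
    qed
  qed
qed

lemma star_K4:
  assumes e: "{a, b} \<in> edges G" "{a, c} \<in> edges G" "{a, g} \<in> edges G"
    and triad: "triad_locations D {a, b} {a, c} {a, g}"
    and Dd: "Dd \<in> D" "{b, c, g} \<subseteq> dverts Dd"
  shows "card {a, b, c, g} = 4 \<and> (\<forall>t\<in>{a, b, c, g}. face_disk D ({a, b, c, g} - {t}))"
proof -
  obtain X12 X13 X23 where X: "X12 \<in> D" "X13 \<in> D" "X23 \<in> D"
      "{a, b} \<in> X12" "{a, c} \<in> X12" "{a, b} \<in> X13" "{a, g} \<in> X13" "{a, c} \<in> X23" "{a, g} \<in> X23"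
    and I: "dverts X12 \<inter> dverts X13 = {a, b}" "dverts X12 \<inter> dverts X23 = {a, c}"
      "dverts X13 \<inter> dverts X23 = {a, g}"
    using three_edges_disks[OF e triad] by metis
  have dist: "a \<noteq> b" "a \<noteq> c" "a \<noteq> g" "b \<noteq> c" "b \<noteq> g" "c \<noteq> g"
    using triad_locations_distinct[OF triad] e edge_not_singleton[OF ugraph] by (auto simp: doubleton_eq_iff)
  have vX: "b \<in> dverts X12" "c \<in> dverts X12" "b \<in> dverts X13" "g \<in> dverts X13"
    "c \<in> dverts X23" "g \<in> dverts X23" using X in_dverts by (metis insertI1 insertI2)+
  have vD: "b \<in> dverts Dd" "c \<in> dverts Dd" "g \<in> dverts Dd" using Dd(2) by auto
  have "g \<notin> dverts X12" "c \<notin> dverts X13" "b \<notin> dverts X23" using I vX dist by auto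
  then have m: "Dd \<noteq> X12" "Dd \<noteq> X13" "Dd \<noteq> X23" using vD by auto
  have W1: "{b, c} \<in> Dd" "{b, c} \<in> X12"
    using two_common_vertices[OF Dd(1) X(1) m(1) dist(4)] vD vX by auto
  have W2: "{b, g} \<in> Dd" "{b, g} \<in> X13"
    using two_common_vertices[OF Dd(1) X(2) m(2) dist(5)] vD vX by auto
  have W3: "{c, g} \<in> Dd" "{c, g} \<in> X23"
    using two_common_vertices[OF Dd(1) X(3) m(3) dist(6)] vD vX by auto
  have K: "card {a, b, c, g} = 4" using dist by simp
  show ?thesis
    using K K4_faces[OF K face_diskI[OF Dd(1) W1(1) W2(1) W3(1)] face_diskI[OF X(3,8,9) W3(2)]
        face_diskI[OF X(2,6,7) W2(2)] face_diskI[OF X(1,4,5) W1(2)]] by blast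
qed

lemma resolvable_star:
  assumes e: "{a, b} \<in> edges G" "{a, c} \<in> edges G" "{a, g} \<in> edges G"
    and triad: "triad_locations D {a, b} {a, c} {a, g}"
  shows "resolvable {a, b} {a, c} {a, g}"
proof -
  have dist: "a \<noteq> b" "a \<noteq> c" "a \<noteq> g" "b \<noteq> c" "b \<noteq> g" "c \<noteq> g"
    using triad_locations_distinct[OF triad] e edge_not_singleton[OF ugraph] by (auto simp: doubleton_eq_iff)
  show ?thesis
  proof (cases "\<exists>C\<in>D. {b, c, g} \<subseteq> dverts C")
    case False
    then show ?thesis by (intro resolvable_by_triple[of b _ c _ g]) (use dist in auto)
  next
    case True
    then have K: "card {a, b, c, g} = 4" "\<forall>t\<in>{a, b, c, g}. face_disk D ({a, b, c, g} - {t})"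
      using star_K4[OF e triad] by blast+
    obtain v where v: "v \<in> {a, b, c, g}"
      and nc: "\<forall>p\<in>{a, b, c, g}. \<forall>q\<in>{a, b, c, g}. p \<noteq> v \<longrightarrow> q \<noteq> v \<longrightarrow> p \<noteq> q \<longrightarrow>
        nonconforming_pair v p q"
      using K4_nonconforming[OF K] by blast
    have choice: "valid_choice G {a, b} True a" "valid_choice G {a, b} False b"
      "valid_choice G {a, c} True c" "valid_choice G {a, c} False c"
      "valid_choice G {a, g} True g" "valid_choice G {a, g} False g"
      using e unfolding valid_choice_def by auto
    show ?thesis using v
    proof (elim insertE emptyE)
      assume "v = a"
      then have pair: "nonconforming_pair a b c" using nc[rule_format, of b c] dist by simp
      show ?thesis by (intro resolvable_by_split[OF choice(1,4,6) _ _ pair])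
          (auto simp: attach_def removed_def)
    next
      assume "v = b"
      then have pair: "nonconforming_pair b a c" using nc[rule_format, of a c] dist by simp
      show ?thesis by (intro resolvable_by_split[OF choice(1,4,6) _ _ pair])
          (auto simp: attach_def removed_def insert_commute)
    next
      assume "v = c"
      then have pair: "nonconforming_pair c a b" using nc[rule_format, of a b] dist by simp
      show ?thesis by (intro resolvable_by_split[OF choice(2,3,6) _ _ pair])
          (auto simp: attach_def removed_def insert_commute)
    next
      assume "v = g"
      then have pair: "nonconforming_pair g a c" using nc[rule_format, of a c] dist by simp
      show ?thesis by (intro resolvable_by_split[OF choice(2,4,5) _ _ pair])
          (auto simp: attach_def removed_def insert_commute)
    qed
  qed
qed

text \<open>Three edge locations.  Either one edge is disjoint from the other two, or (as the disks
  through pairs of them meet exactly in the common edge) all three share a vertex.\<close>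

lemma resolvable_edges:
  assumes e1: "e1 \<in> edges G" and e2: "e2 \<in> edges G" and e3: "e3 \<in> edges G"
    and triad: "triad_locations D e1 e2 e3"
  shows "resolvable e1 e2 e3"
proof (cases "e3 \<inter> (e1 \<union> e2) = {}")
  case False
  obtain X12 X13 X23 where X: "e1 \<subseteq> dverts X12" "e2 \<subseteq> dverts X12" "e1 \<subseteq> dverts X13"
      "e3 \<subseteq> dverts X13" "e2 \<subseteq> dverts X23" "e3 \<subseteq> dverts X23"
    and I: "dverts X12 \<inter> dverts X13 = e1" "dverts X12 \<inter> dverts X23 = e2"
    using three_edges_disks[OF e1 e2 e3 triad] by metis
  obtain a where a3: "a \<in> e3" "a \<in> e1 \<or> a \<in> e2" using False by auto
  have a1: "a \<in> e1" using X I a3 by blast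
  have a2: "a \<in> e2" using X I a1 a3(1) by blast
  obtain b where "e1 = {a, b}" using ugraph_edge_other_end[OF ugraph e1 a1] by blast
  moreover obtain c where "e2 = {a, c}" using ugraph_edge_other_end[OF ugraph e2 a2] by blast
  moreover obtain g where "e3 = {a, g}" using ugraph_edge_other_end[OF ugraph e3 a3(1)] by blast
  ultimately show ?thesis using resolvable_star e1 e2 e3 triad by blast
qed (use resolvable_edges_one_disjoint e1 e2 e3 triad in blast)

theorem triad_locations_resolvable:
  assumes "is_location G l0" "is_location G l1" "is_location G l2" "triad_locations D l0 l1 l2"
  shows "resolvable l0 l1 l2"
proof -
  have edge_vertices: "resolvable e {u} {w}"
    if e: "e \<in> edges G" "triad_locations D e {u} {w}" for e u w
  proof -
    obtain a b where "e = {a, b}" "a \<noteq> b" using ugraph_edge[OF ugraph e(1)] by blast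
    then show ?thesis using resolvable_edge_vertices e by blast
  qed
  have vertex: "\<exists>v. l = {v}" if "is_location G l" "l \<notin> edges G" for l
    using that unfolding is_location_def by blast
  note swaps = triad_locations_swap01 triad_locations_swap12 resolvable_swap01 resolvable_swap12
  show ?thesis
  proof (cases "l0 \<in> edges G"; cases "l1 \<in> edges G"; cases "l2 \<in> edges G")
    assume "l0 \<in> edges G" "l1 \<in> edges G" "l2 \<in> edges G"
    then show ?thesis using resolvable_edges assms(4) by blast
  next
    assume "l0 \<in> edges G" "l1 \<in> edges G" "l2 \<notin> edges G"
    then show ?thesis using resolvable_edges_vertex vertex[OF assms(3)] assms(4) by blast
  next
    assume "l0 \<in> edges G" "l1 \<notin> edges G" "l2 \<in> edges G"
    then show ?thesis using resolvable_edges_vertex vertex[OF assms(2)] assms(4) swaps by metis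
  next
    assume "l0 \<in> edges G" "l1 \<notin> edges G" "l2 \<notin> edges G"
    then show ?thesis using edge_vertices vertex[OF assms(2)] vertex[OF assms(3)] assms(4) by blast
  next
    assume "l0 \<notin> edges G" "l1 \<in> edges G" "l2 \<in> edges G"
    then show ?thesis using resolvable_edges_vertex vertex[OF assms(1)] assms(4) swaps by metis
  next
    assume "l0 \<notin> edges G" "l1 \<in> edges G" "l2 \<notin> edges G"
    then show ?thesis using edge_vertices vertex[OF assms(1)] vertex[OF assms(3)] assms(4) swaps
      by metis
  next
    assume "l0 \<notin> edges G" "l1 \<notin> edges G" "l2 \<in> edges G"
    then show ?thesis using edge_vertices vertex[OF assms(1)] vertex[OF assms(2)] assms(4) swaps
      by metis
  next
    assume "l0 \<notin> edges G" "l1 \<notin> edges G" "l2 \<notin> edges G"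
    then show ?thesis
      using resolvable_vertices vertex[OF assms(1)] vertex[OF assms(2)] vertex[OF assms(3)] assms(4)
      by blast
  qed
qed

end

section \<open>From an augmented model of \<open>G\<close> to an enlargement minor\<close>

definition touches :: "'b ugr \<Rightarrow> 'b set \<Rightarrow> 'b set \<Rightarrow> bool" where
  "touches H X Y \<longleftrightarrow> (\<exists>h\<in>X. \<exists>h'\<in>Y. {h, h'} \<in> edges H)"

lemma touches_sym: "touches H X Y \<Longrightarrow> touches H Y X"
  unfolding touches_def by (metis insert_commute)

text \<open>A model in \<open>H\<close> of \<open>G\<close> with the edges \<open>R\<close> deleted (branch sets \<open>B z\<close>), together with a
  further connected set \<open>T\<close>, disjoint from all branch sets, that touches \<open>B z\<close> for each \<open>z \<in> A\<close>.\<close>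

definition augmented_model ::
  "'b ugr \<Rightarrow> 'a ugr \<Rightarrow> ('a \<Rightarrow> 'b set) \<Rightarrow> 'b set \<Rightarrow> 'a set set \<Rightarrow> 'a set \<Rightarrow> bool" where
  "augmented_model H G B T R A \<longleftrightarrow>
   (\<forall>z\<in>verts G. B z \<noteq> {} \<and> B z \<subseteq> verts H \<and> connected_set H (B z)) \<and>
   (\<forall>z\<in>verts G. \<forall>z'\<in>verts G. z \<noteq> z' \<longrightarrow> B z \<inter> B z' = {}) \<and>
   (\<forall>a b. {a, b} \<in> edges G - R \<longrightarrow> touches H (B a) (B b)) \<and>
   T \<noteq> {} \<and> T \<subseteq> verts H \<and> connected_set H T \<and> (\<forall>z\<in>verts G. T \<inter> B z = {}) \<and>
   (\<forall>z\<in>A. touches H T (B z))"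

text \<open>Any graph \<open>K\<close> whose vertices are relabelled injectively as vertices of \<open>G\<close> (\<open>Some z\<close>) or as
  the extra set (\<open>None\<close>) is a minor of \<open>H\<close>, provided its edges are realised by touching sets.\<close>

lemma augmented_model_minor:
  fixes K :: "'c ugr" and g :: "'c \<Rightarrow> 'a option"
  assumes aug: "augmented_model H G B T R A"
    and g: "inj_on g (verts K)" "\<forall>a\<in>verts K. g a = None \<or> (\<exists>z\<in>verts G. g a = Some z)"
    and E: "\<forall>e\<in>edges K. \<exists>a b. e = {a, b} \<and>
              touches H (case_option T B (g a)) (case_option T B (g b))"
  shows "has_minor H K"
proof -
  define B' where "B' a = case_option T B (g a)" for a
  have set: "B' a \<noteq> {} \<and> B' a \<subseteq> verts H \<and> connected_set H (B' a)" if a: "a \<in> verts K" for a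
  proof -
    consider "g a = None" | z where "z \<in> verts G" "g a = Some z" using g(2) a by auto
    then show ?thesis by cases (use aug in \<open>simp_all add: augmented_model_def B'_def\<close>)
  qed
  have in_G: "z \<in> verts G" if "a \<in> verts K" "g a = Some z" for a z
    using g(2) that by fastforce
  have BB: "\<forall>z\<in>verts G. \<forall>z'\<in>verts G. z \<noteq> z' \<longrightarrow> B z \<inter> B z' = {}"
    and TB: "\<forall>z\<in>verts G. T \<inter> B z = {}" using aug unfolding augmented_model_def by blast+
  have disj: "B' a \<inter> B' b = {}" if ab: "a \<in> verts K" "b \<in> verts K" "a \<noteq> b" for a b
  proof -
    have ne: "g a \<noteq> g b" using g(1) ab unfolding inj_on_def by blast
    show ?thesis
    proof (cases "g a"; cases "g b")
      fix z z' assume "g a = Some z" "g b = Some z'"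
      then show ?thesis using ne BB in_G[OF ab(1)] in_G[OF ab(2)] unfolding B'_def by simp
    next
      fix z assume "g a = None" "g b = Some z"
      then show ?thesis using TB in_G[OF ab(2)] unfolding B'_def by simp
    next
      fix z assume "g a = Some z" "g b = None"
      then show ?thesis using TB in_G[OF ab(1)] unfolding B'_def by (simp add: Int_commute)
    qed (use ne in simp)
  qed
  have "\<forall>e\<in>edges K. \<exists>a b h h'. e = {a, b} \<and> h \<in> B' a \<and> h' \<in> B' b \<and> {h, h'} \<in> edges H"
    using E unfolding touches_def B'_def by fast
  then show ?thesis unfolding has_minor_def using set disj by (intro exI[of _ B']) fast
qed

lemma augmented_model_enlargement8:
  assumes ug: "ugraph G" and aug: "augmented_model H G B T {} A"
    and x: "x1 \<in> A" "x2 \<in> A" "x3 \<in> A" "x1 \<in> verts G" "x2 \<in> verts G" "x3 \<in> verts G"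
      "x1 \<noteq> x2" "x1 \<noteq> x3" "x2 \<noteq> x3"
    and nd: "\<not> (\<exists>C\<in>D. {x1, x2, x3} \<subseteq> dverts C)"
  shows "\<exists>K :: ('a + bool) ugr. has_minor H K \<and> weak_enlargement8 G D K"
proof -
  define K :: "('a + bool) ugr" where "K = (Inl ` verts G \<union> {Inr True},
          (image Inl) ` edges G \<union> {{Inr True, Inl x1}, {Inr True, Inl x2}, {Inr True, Inl x3}})"
  define g :: "'a + bool \<Rightarrow> 'a option" where "g = case_sum Some (\<lambda>_. None)"
  have "has_minor H K"
  proof (rule augmented_model_minor[OF aug, of g])
    show "inj_on g (verts K)" unfolding K_def g_def inj_on_def by auto
    show "\<forall>a\<in>verts K. g a = None \<or> (\<exists>z\<in>verts G. g a = Some z)" unfolding K_def g_def by auto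
    have old_edge: "touches H (B a) (B b)" if "{a, b} \<in> edges G" for a b
      using aug that unfolding augmented_model_def by blast
    have new_edge: "touches H T (B z)" if "z \<in> {x1, x2, x3}" for z
      using aug that x(1-3) unfolding augmented_model_def by blast
    show "\<forall>e\<in>edges K. \<exists>a b. e = {a, b} \<and> touches H (case_option T B (g a)) (case_option T B (g b))"
    proof
      fix e assume "e \<in> edges K"
      then consider (old) e0 where "e0 \<in> edges G" "e = Inl ` e0"
        | (new) z where "z \<in> {x1, x2, x3}" "e = {Inr True, Inl z}"
        unfolding K_def by auto
      then show "\<exists>a b. e = {a, b} \<and> touches H (case_option T B (g a)) (case_option T B (g b))"
      proof cases
        case old
        then obtain a b where "e0 = {a, b}" using ugraph_edge[OF ug] by blast
        then show ?thesis using old by (intro exI[of _ "Inl a"] exI[of _ "Inl b"]) (simp add: g_def old old_edge)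
      next
        case new
        then show ?thesis by (intro exI[of _ "Inr True"] exI[of _ "Inl z"]) (simp add: g_def new new_edge)
      qed
    qed
  qed
  moreover have "weak_enlargement8 G D K" unfolding weak_enlargement8_def K_def using x nd by blast
  ultimately show ?thesis by blast
qed

lemma valid_split_pair:
  assumes ug: "ugraph G" and v: "v \<in> verts G" "p \<noteq> q" "p \<in> nbrs G v" "q \<in> nbrs G v"
    and dg: "deg G v \<ge> 4"
  shows "valid_split G v (nbrs G v - {p, q}) {p, q}"
proof -
  have "card (nbrs G v - {p, q}) = card (nbrs G v) - 2"
    using v(2-4) by (subst card_Diff_subset) (auto simp: nbrs_finite[OF ug])
  then show ?thesis unfolding valid_split_def using v dg unfolding deg_def by auto
qed

text \<open>Deleted edges only at \<open>v\<close> towards \<open>p, q\<close>, and \<open>v, p, q\<close> attached: splitting \<open>v\<close> into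
  \<open>B v\<close> (keeping the other neighbours) and \<open>T\<close> (taking \<open>p, q\<close>) gives a 3-enlargement.\<close>

lemma augmented_model_enlargement3:
  assumes ug: "ugraph G" and aug: "augmented_model H G B T R A"
    and v: "v \<in> verts G" "v \<in> A" "p \<in> A" "q \<in> A" "p \<noteq> q" "p \<in> nbrs G v" "q \<in> nbrs G v"
    and R: "R \<subseteq> {{v, p}, {v, q}}" and dg: "deg G v \<ge> 4"
    and nc: "\<not> conforming_split G D v (nbrs G v - {p, q}) {p, q}"
  shows "\<exists>K :: ('a + bool) ugr. has_minor H K \<and> enlargement3 G D K"
proof -
  define N1 where "N1 = nbrs G v - {p, q}"
  have e3: "enlargement3 G D (split_graph G v N1 {p, q})"
    using valid_split_pair[OF ug v(1,5-7) dg] nc unfolding enlargement3_def N1_def by blast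
  define g :: "'a + bool \<Rightarrow> 'a option" where "g = case_sum Some (\<lambda>b. if b then Some v else None)"
  have kept: "touches H (B a) (B b)" if "{a, b} \<in> edges G" "{a, b} \<notin> R" for a b
    using aug that unfolding augmented_model_def by blast
  have attached: "touches H T (B z)" if "z \<in> {v, p, q}" for z
    using aug that v(2-4) unfolding augmented_model_def by blast
  have "has_minor H (split_graph G v N1 {p, q})"
  proof (rule augmented_model_minor[OF aug, of g])
    show "inj_on g (verts (split_graph G v N1 {p, q}))"
      unfolding split_graph_def g_def inj_on_def by auto
    show "\<forall>a\<in>verts (split_graph G v N1 {p, q}). g a = None \<or> (\<exists>z\<in>verts G. g a = Some z)"
      unfolding split_graph_def g_def using v(1) by auto
    show "\<forall>e\<in>edges (split_graph G v N1 {p, q}). \<exists>a b. e = {a, b} \<and>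
        touches H (case_option T B (g a)) (case_option T B (g b))"
    proof
      fix e assume "e \<in> edges (split_graph G v N1 {p, q})"
      then consider (old) e0 where "e0 \<in> edges G" "v \<notin> e0" "e = Inl ` e0"
        | (split) "e = {Inr True, Inr False}"
        | (N1) a where "a \<in> N1" "e = {Inr True, Inl a}"
        | (N2) b where "b \<in> {p, q}" "e = {Inr False, Inl b}"
        unfolding split_graph_def by auto
      then show "\<exists>a b. e = {a, b} \<and> touches H (case_option T B (g a)) (case_option T B (g b))"
      proof cases
        case old
        obtain a b where ab: "e0 = {a, b}" using ugraph_edge[OF ug old(1)] by blast
        then have "{a, b} \<notin> R" using R old(2) by auto
        then show ?thesis using old ab kept
          by (intro exI[of _ "Inl a"] exI[of _ "Inl b"]) (simp add: g_def)
      next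
        case split
        have "touches H (B v) T" using touches_sym[OF attached[of v]] by simp
        then show ?thesis using split
          by (intro exI[of _ "Inr True"] exI[of _ "Inr False"]) (simp add: g_def)
      next
        case N1
        then have "{v, a} \<in> edges G" "a \<noteq> p" "a \<noteq> q" "a \<noteq> v"
          unfolding N1_def using nbrs_not_self[OF ug] by (auto simp: nbrs_iff insert_commute)
        moreover have "{v, a} \<notin> R" using R calculation(2-4) by (auto simp: doubleton_eq_iff)
        ultimately show ?thesis using N1(2) kept
          by (intro exI[of _ "Inr True"] exI[of _ "Inl a"]) (simp add: g_def)
      next
        case N2
        then show ?thesis using attached
          by (intro exI[of _ "Inr False"] exI[of _ "Inl b"]) (simp add: g_def)
      qed
    qed
  qed
  then show ?thesis using e3 by blast
qed

context disk_graph
begin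

lemma pattern_minor:
  assumes aug: "augmented_model H G B T R A" and A: "A \<subseteq> verts G"
    and pattern: "enlargement_pattern A R"
  shows "\<exists>K :: ('a + bool) ugr. has_minor H K \<and> (enlargement3 G D K \<or> weak_enlargement8 G D K)"
  using pattern unfolding enlargement_pattern_def
proof (elim disjE conjE exE)
  fix x1 x2 x3 assume "R = {}" and x: "x1 \<in> A" "x2 \<in> A" "x3 \<in> A" "x1 \<noteq> x2" "x1 \<noteq> x3" "x2 \<noteq> x3"
    and nd: "\<not> (\<exists>C\<in>D. {x1, x2, x3} \<subseteq> dverts C)"
  then show ?thesis
    using augmented_model_enlargement8[OF ugraph, of H B T A x1 x2 x3 D] aug A by blast
next
  fix v p q assume "v \<in> A" "p \<in> A" "q \<in> A" "nonconforming_pair v p q" "R \<subseteq> {{v, p}, {v, q}}"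
  then show ?thesis
    using augmented_model_enlargement3[OF ugraph aug, of v p q D] A
    unfolding nonconforming_pair_def by blast
qed

end

section \<open>Subdivisions and locations of their vertices\<close>

locale subdivision =
  fixes G :: "'a ugr" and H :: "'b ugr" and S :: "'b ugr" and phi :: "'a \<Rightarrow> 'b"
    and P :: "'a set \<Rightarrow> 'b list"
  assumes G_ugraph: "ugraph G" and S_subgraph: "subgraph S H" and model: "subdivision_model G S phi P"
begin

lemma model_unfolded:
  "inj_on phi (verts G) \<and> phi ` verts G \<subseteq> verts S \<and>
     (\<forall>e\<in>edges G. is_path S (P e) \<and> {hd (P e), last (P e)} = phi ` e \<and>
        interior (P e) \<inter> phi ` verts G = {}) \<and>
     (\<forall>e\<in>edges G. \<forall>e'\<in>edges G. e \<noteq> e' \<longrightarrow> interior (P e) \<inter> set (P e') = {}) \<and>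
     verts S = phi ` verts G \<union> (\<Union>e\<in>edges G. set (P e)) \<and>
     edges S = (\<Union>e\<in>edges G. path_edges (P e))"
  using model unfolding subdivision_model_def .

lemma phi_inj: "inj_on phi (verts G)"
  using model_unfolded by (rule conjunct1)

lemma phi_verts_S: "phi ` verts G \<subseteq> verts S"
  using model_unfolded by (rule conjunct1[OF conjunct2])

lemma seg_path: "e \<in> edges G \<Longrightarrow> is_path S (P e)"
  using model_unfolded by simp

lemma seg_ends_image: "e \<in> edges G \<Longrightarrow> {hd (P e), last (P e)} = phi ` e"
  using model_unfolded by simp

lemma seg_interior_no_branch: "e \<in> edges G \<Longrightarrow> interior (P e) \<inter> phi ` verts G = {}"
  using model_unfolded by simp

lemma seg_interior_disjoint:
  "e \<in> edges G \<Longrightarrow> e' \<in> edges G \<Longrightarrow> e \<noteq> e' \<Longrightarrow> interior (P e) \<inter> set (P e') = {}"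
  using model_unfolded by simp

lemma verts_S: "verts S = phi ` verts G \<union> (\<Union>e\<in>edges G. set (P e))"
  using model_unfolded by simp

lemma verts_S_H: "verts S \<subseteq> verts H"
  using S_subgraph unfolding subgraph_def by simp

lemma seg_basic: "e \<in> edges G \<Longrightarrow> length (P e) \<ge> 2 \<and> distinct (P e) \<and> set (P e) \<subseteq> verts S"
  using seg_path unfolding is_path_def by simp

lemma edges_S_H: "edges S \<subseteq> edges H"
  using S_subgraph unfolding subgraph_def by simp

lemma seg_walk: "e \<in> edges G \<Longrightarrow> is_walk H (P e)"
  using is_walk_mono[OF is_path_walk[OF seg_path] edges_S_H] .

lemma seg_edge_H: "e \<in> edges G \<Longrightarrow> Suc i < length (P e) \<Longrightarrow> {P e ! i, P e ! Suc i} \<in> edges H"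
  using seg_walk unfolding is_walk_def by blast

definition seg_start :: "'a set \<Rightarrow> 'a" where "seg_start e = inv_into (verts G) phi (hd (P e))"
definition seg_end :: "'a set \<Rightarrow> 'a" where "seg_end e = inv_into (verts G) phi (last (P e))"

lemma seg_start_end:
  assumes e: "e \<in> edges G"
  shows "seg_start e \<in> e \<and> seg_end e \<in> e \<and>
         phi (seg_start e) = hd (P e) \<and> phi (seg_end e) = last (P e) \<and>
         seg_start e \<noteq> seg_end e \<and> e = {seg_start e, seg_end e} \<and>
         seg_start e \<in> verts G \<and> seg_end e \<in> verts G"
proof -
  have eV: "e \<subseteq> verts G" using edge_subset_verts[OF G_ugraph e] .
  have h: "hd (P e) \<in> phi ` e" "last (P e) \<in> phi ` e" using seg_ends_image[OF e] by auto
  obtain a where a: "a \<in> e" "hd (P e) = phi a" using h(1) by auto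
  obtain b where b: "b \<in> e" "last (P e) = phi b" using h(2) by auto
  have ha: "seg_start e = a" unfolding seg_start_def using a eV inv_into_f_f[OF phi_inj] by auto
  have hb: "seg_end e = b" unfolding seg_end_def using b eV inv_into_f_f[OF phi_inj] by auto
  have l: "length (P e) \<ge> 2" "distinct (P e)" using seg_basic[OF e] by auto
  then have ne: "P e \<noteq> []" by auto
  have "P e ! 0 \<noteq> P e ! (length (P e) - 1)"
    using nth_eq_iff_index_eq[OF l(2), of 0 "length (P e) - 1"] l(1) ne by simp
  then have "a \<noteq> b" using a b hd_conv_nth[OF ne] last_conv_nth[OF ne] by auto
  moreover obtain u v where "e = {u, v}" "u \<noteq> v" using ugraph_edge[OF G_ugraph e] by blast
  ultimately have "e = {a, b}" using a(1) b(1) by auto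
  then show ?thesis using ha hb a b \<open>a \<noteq> b\<close> eV by auto
qed

lemma seg_nth_ends:
  assumes e: "e \<in> edges G"
  shows "P e ! 0 = phi (seg_start e) \<and> P e ! (length (P e) - 1) = phi (seg_end e)"
proof -
  have ne: "P e \<noteq> []" using seg_basic[OF e] by auto
  show ?thesis using hd_conv_nth[OF ne] last_conv_nth[OF ne] seg_start_end[OF e] by simp
qed

lemma seg_nonbranch_interior:
  assumes e: "e \<in> edges G" and j: "j < length (P e)" and ph: "P e ! j \<notin> phi ` verts G"
  shows "P e ! j \<in> interior (P e) \<and> 0 < j \<and> j < length (P e) - 1"
proof -
  have V: "seg_start e \<in> verts G" "seg_end e \<in> verts G" using seg_start_end[OF e] by auto
  have "j \<noteq> 0" using ph seg_nth_ends[OF e] V by auto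
  moreover have "j \<noteq> length (P e) - 1" using ph seg_nth_ends[OF e] V by auto
  ultimately have "0 < j \<and> j < length (P e) - 1" using j by linarith
  then show ?thesis using interior_conv_nth[of "P e"] seg_basic[OF e] by blast
qed

lemma phi_in_seg:
  assumes e: "e \<in> edges G" and v: "v \<in> verts G"
  shows "phi v \<in> set (P e) \<longleftrightarrow> v \<in> e"
proof
  assume a: "phi v \<in> set (P e)"
  have se: "phi (seg_start e) = hd (P e)" "phi (seg_end e) = last (P e)"
    "seg_start e \<in> verts G" "seg_end e \<in> verts G" "e = {seg_start e, seg_end e}"
    using seg_start_end[OF e] by auto
  have "phi v \<in> insert (hd (P e)) (insert (last (P e)) (interior (P e)))"
    using a set_path_decomp[of "P e"] seg_basic[OF e] by simp
  moreover have "phi v \<notin> interior (P e)" using seg_interior_no_branch[OF e] v by blast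
  ultimately have "phi v = phi (seg_start e) \<or> phi v = phi (seg_end e)" using se by simp
  then have "v = seg_start e \<or> v = seg_end e" using phi_inj v se(3,4) unfolding inj_on_def by metis
  then show "v \<in> e" using se(5) by blast
next
  assume "v \<in> e"
  then have "v = seg_start e \<or> v = seg_end e" using seg_start_end[OF e] by blast
  moreover have "hd (P e) \<in> set (P e)" "last (P e) \<in> set (P e)" using seg_basic[OF e]
    by (metis hd_in_set last_in_set list.size(3) not_numeral_le_zero)+
  ultimately show "phi v \<in> set (P e)" using seg_start_end[OF e] by auto
qed

definition location :: "'b \<Rightarrow> 'a set" where
  "location h = (if h \<in> phi ` verts G then {inv_into (verts G) phi h}
      else (THE e. e \<in> edges G \<and> h \<in> interior (P e)))"

lemma location_vertex:
  assumes "h \<in> phi ` verts G"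
  shows "\<exists>v\<in>verts G. location h = {v} \<and> phi v = h"
  using assms inv_into_into[OF assms] f_inv_into_f[OF assms] unfolding location_def by auto

lemma location_edge:
  assumes h: "h \<in> verts S" "h \<notin> phi ` verts G"
  shows "location h \<in> edges G \<and> h \<in> interior (P (location h))"
proof -
  have "h \<in> (\<Union>e\<in>edges G. set (P e))" using h verts_S by blast
  then obtain e where e: "e \<in> edges G" "h \<in> set (P e)" by blast
  have ends: "hd (P e) \<in> phi ` verts G" "last (P e) \<in> phi ` verts G"
    using seg_start_end[OF e(1)] by (metis imageI)+
  have "h \<in> insert (hd (P e)) (insert (last (P e)) (interior (P e)))"
    using e(2) set_path_decomp[of "P e"] seg_basic[OF e(1)] by simp
  then have hi: "h \<in> interior (P e)" using ends h(2) by (metis insertE)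
  have unique: "e' = e" if "e' \<in> edges G \<and> h \<in> interior (P e')" for e'
    using seg_interior_disjoint[of e' e] that e by blast
  have "(THE e. e \<in> edges G \<and> h \<in> interior (P e)) = e"
    by (rule the_equality) (use e(1) hi unique in blast)+
  then show ?thesis unfolding location_def using h(2) e(1) hi by simp
qed

lemma location_is_location:
  assumes "h \<in> verts S"
  shows "is_location G (location h)"
proof (cases "h \<in> phi ` verts G")
  case True
  then show ?thesis using location_vertex unfolding is_location_def by blast
next
  case False
  then show ?thesis using location_edge[OF assms] unfolding is_location_def by blast
qed

lemma location_edge_nonbranch:
  assumes "h \<in> verts S" "location h \<in> edges G"
  shows "h \<in> interior (P (location h)) \<and> h \<notin> phi ` verts G"
proof (cases "h \<in> phi ` verts G")
  case True
  then obtain v where "location h = {v}" using location_vertex by blast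
  then show ?thesis using edge_not_singleton[OF G_ugraph assms(2)] by blast
next
  case False
  then show ?thesis using location_edge[OF assms(1)] by blast
qed

lemma location_nonedge:
  assumes "h \<in> verts S" "location h \<notin> edges G"
  shows "\<exists>v\<in>verts G. location h = {v} \<and> phi v = h"
  using assms location_edge location_vertex by blast

lemma induced_dverts_iff_on_disk:
  assumes h: "h \<in> verts S" and C: "C \<subseteq> edges G"
  shows "h \<in> induced_dverts P C \<longleftrightarrow> on_disk C (location h)"
proof (cases "h \<in> phi ` verts G")
  case True
  obtain v where v: "v \<in> verts G" "location h = {v}" "phi v = h" using location_vertex[OF True] by blast
  have nC: "{v} \<notin> C" using C edge_not_singleton[OF G_ugraph] by blast
  have "h \<in> induced_dverts P C \<longleftrightarrow> (\<exists>e\<in>C. v \<in> e)"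
    unfolding induced_dverts_def using phi_in_seg v C by (metis (no_types, lifting) UN_iff subsetD)
  also have "\<dots> \<longleftrightarrow> v \<in> dverts C" unfolding dverts_def by blast
  finally show ?thesis unfolding on_disk_def using v(2) nC by auto
next
  case False
  have l: "location h \<in> edges G" "h \<in> interior (P (location h))" using location_edge[OF h False] by auto
  have "h \<in> induced_dverts P C \<longleftrightarrow> location h \<in> C"
  proof
    assume "h \<in> induced_dverts P C"
    then obtain e where e: "e \<in> C" "h \<in> set (P e)" unfolding induced_dverts_def by blast
    show "location h \<in> C"
    proof (rule ccontr)
      assume "location h \<notin> C"
      then have "interior (P (location h)) \<inter> set (P e) = {}"
        using seg_interior_disjoint[OF l(1)] C e(1) by blast
      then show False using l(2) e(2) by blast
    qed
  next
    assume lC: "location h \<in> C"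
    have "h \<in> set (P (location h))" using l(2) interior_subset by fast
    then show "h \<in> induced_dverts P C" using lC unfolding induced_dverts_def by fast
  qed
  moreover have "location h \<noteq> {v}" for v using edge_not_singleton[OF G_ugraph l(1)] .
  ultimately show ?thesis unfolding on_disk_def by auto
qed

end

section \<open>The triad yields an augmented model\<close>

text \<open>Every segment \<open>P e\<close> is split into an
  initial piece (positions \<open>< cut_lo e\<close>), joined to the branch set of its first end, and a final
  piece (positions \<open>\<ge> cut_hi e\<close>), joined to the branch set of its last end.  Normally
  \<open>cut_lo e = cut_hi e = 1\<close>.  If a leg ends at position \<open>k\<close> inside \<open>P e\<close>, the cut is moved there:
  for \<open>kk i\<close> the end \<open>y i\<close> is left out of both pieces (and joins the legs), otherwise it joins the
  piece on the side of \<open>zz i\<close>.  The extra set consists of the legs.\<close>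

locale triad_model = subdivision G H S phi P
  for G :: "'a ugr" and H :: "'b ugr" and S :: "'b ugr" and phi :: "'a \<Rightarrow> 'b"
    and P :: "'a set \<Rightarrow> 'b list" +
  fixes x :: 'b and L :: "nat \<Rightarrow> 'b list" and kk :: "nat \<Rightarrow> bool" and zz :: "nat \<Rightarrow> 'a"
  assumes x_H: "x \<in> verts H" and x_S: "x \<notin> verts S"
    and legs: "\<And>i. i < 3 \<Longrightarrow> is_path H (L i) \<and> hd (L i) = x \<and> last (L i) \<in> verts S \<and>
                            interior (L i) \<inter> verts S = {}"
    and choice: "\<And>i. i < 3 \<Longrightarrow> valid_choice G (location (last (L i))) (kk i) (zz i)"
    and distinct_locations: "\<And>i j. i < 3 \<Longrightarrow> j < 3 \<Longrightarrow> i \<noteq> j \<Longrightarrow>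
               location (last (L i)) \<noteq> location (last (L j))"
begin

definition y :: "nat \<Rightarrow> 'b" where "y i = last (L i)"
definition loc :: "nat \<Rightarrow> 'a set" where "loc i = location (y i)"

lemma y_S: "i < 3 \<Longrightarrow> y i \<in> verts S"
  using legs unfolding y_def by blast

lemma loc_edge: "i < 3 \<Longrightarrow> loc i \<in> edges G \<Longrightarrow> y i \<in> interior (P (loc i)) \<and> y i \<notin> phi ` verts G"
  unfolding loc_def using location_edge_nonbranch y_S by blast

lemma loc_vertex: "i < 3 \<Longrightarrow> loc i \<notin> edges G \<Longrightarrow> \<exists>v\<in>verts G. loc i = {v} \<and> phi v = y i"
  unfolding loc_def using location_nonedge y_S by blast

definition port_index :: "nat \<Rightarrow> nat" where
  "port_index i = (SOME k. 0 < k \<and> k < length (P (loc i)) - 1 \<and> P (loc i) ! k = y i)"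

lemma port_index_props:
  assumes "i < 3" "loc i \<in> edges G"
  shows "0 < port_index i \<and> port_index i < length (P (loc i)) - 1 \<and> P (loc i) ! port_index i = y i"
proof -
  have "y i \<in> interior (P (loc i))" using loc_edge[OF assms] by simp
  then have "\<exists>k. 0 < k \<and> k < length (P (loc i)) - 1 \<and> P (loc i) ! k = y i"
    using interior_conv_nth[of "P (loc i)"] seg_basic[OF assms(2)] by simp
  then show ?thesis unfolding port_index_def by (rule someI_ex)
qed

text \<open>Segments containing the end of a leg, and the (unique, as locations are distinct) leg.\<close>

definition is_port :: "'a set \<Rightarrow> bool" where "is_port e = (\<exists>i<3. loc i = e)"
definition port_of :: "'a set \<Rightarrow> nat" where "port_of e = (SOME i. i < 3 \<and> loc i = e)"

lemma port_of_loc: "i < 3 \<Longrightarrow> port_of (loc i) = i"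
proof -
  assume i: "i < 3"
  have "\<exists>i'. i' < 3 \<and> loc i' = loc i" using i by blast
  then have s: "port_of (loc i) < 3 \<and> loc (port_of (loc i)) = loc i"
    unfolding port_of_def by (rule someI_ex)
  show ?thesis
  proof (rule ccontr)
    assume "port_of (loc i) \<noteq> i"
    then have "loc (port_of (loc i)) \<noteq> loc i"
      using distinct_locations[of "port_of (loc i)" i] s i unfolding loc_def y_def by blast
    then show False using s by simp
  qed
qed

definition cut_lo :: "'a set \<Rightarrow> nat" where
  "cut_lo e = (if is_port e then
     (if kk (port_of e) then port_index (port_of e)
      else if zz (port_of e) = seg_start e then Suc (port_index (port_of e))
      else port_index (port_of e))
   else 1)"

definition cut_hi :: "'a set \<Rightarrow> nat" where
  "cut_hi e = (if is_port e then
     (if kk (port_of e) then Suc (port_index (port_of e))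
      else if zz (port_of e) = seg_start e then Suc (port_index (port_of e))
      else port_index (port_of e))
   else 1)"

lemma cut_at_port:
  assumes i: "i < 3"
  shows "(kk i \<longrightarrow> cut_lo (loc i) = port_index i \<and> cut_hi (loc i) = Suc (port_index i)) \<and>
         (\<not> kk i \<and> zz i = seg_start (loc i) \<longrightarrow>
            cut_lo (loc i) = Suc (port_index i) \<and> cut_hi (loc i) = Suc (port_index i)) \<and>
         (\<not> kk i \<and> zz i \<noteq> seg_start (loc i) \<longrightarrow>
            cut_lo (loc i) = port_index i \<and> cut_hi (loc i) = port_index i)"
proof -
  have "is_port (loc i)" unfolding is_port_def using i by blast
  then show ?thesis unfolding cut_lo_def cut_hi_def using port_of_loc[OF i] by simp
qed

lemma cut_bounds:
  assumes e: "e \<in> edges G"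
  shows "1 \<le> cut_lo e \<and> cut_lo e \<le> cut_hi e \<and> cut_hi e \<le> length (P e) - 1"
proof (cases "is_port e")
  case True
  then obtain i where i: "i < 3" "loc i = e" unfolding is_port_def by blast
  have k: "0 < port_index i" "port_index i < length (P e) - 1" using port_index_props[of i] i e by auto
  show ?thesis
    using cut_at_port[OF i(1)] k i(2) by (cases "kk i"; cases "zz i = seg_start (loc i)") auto
next
  case False
  have "length (P e) \<ge> 2" using seg_basic[OF e] by simp
  then show ?thesis unfolding cut_lo_def cut_hi_def using False by simp
qed

lemma cut_closed:
  assumes e: "e \<in> edges G" and nk: "\<And>i. i < 3 \<Longrightarrow> loc i = e \<Longrightarrow> \<not> kk i"
  shows "cut_lo e = cut_hi e"
proof (cases "is_port e")
  case True
  then obtain i where i: "i < 3" "loc i = e" unfolding is_port_def by blast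
  show ?thesis using cut_at_port[OF i(1)] nk[OF i] i(2) by (cases "zz i = seg_start (loc i)") auto
next
  case False
  then show ?thesis unfolding cut_lo_def cut_hi_def by simp
qed

definition branch :: "'a \<Rightarrow> 'b set" where
  "branch z = insert (phi z) ((\<Union>e\<in>{e\<in>edges G. seg_start e = z}. set (take (cut_lo e) (P e))) \<union>
                          (\<Union>e\<in>{e\<in>edges G. seg_end e = z}. set (drop (cut_hi e) (P e))))"

lemma branch_elem:
  assumes "h \<in> branch z"
  shows "h = phi z \<or> (\<exists>e\<in>edges G. \<exists>j<length (P e). P e ! j = h \<and>
           ((j < cut_lo e \<and> seg_start e = z) \<or> (cut_hi e \<le> j \<and> seg_end e = z)))"
proof -
  have "h = phi z \<or> h \<in> (\<Union>e\<in>{e\<in>edges G. seg_start e = z}. set (take (cut_lo e) (P e))) \<or>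
        h \<in> (\<Union>e\<in>{e\<in>edges G. seg_end e = z}. set (drop (cut_hi e) (P e)))"
    using assms unfolding branch_def by simp
  then show ?thesis
  proof (elim disjE)
    assume "h \<in> (\<Union>e\<in>{e\<in>edges G. seg_start e = z}. set (take (cut_lo e) (P e)))"
    then obtain e where e: "e \<in> edges G" "seg_start e = z" "h \<in> set (take (cut_lo e) (P e))" by blast
    then obtain j where "j < cut_lo e" "j < length (P e)" "P e ! j = h" unfolding in_set_take_conv_nth by blast
    then show ?thesis using e by blast
  next
    assume "h \<in> (\<Union>e\<in>{e\<in>edges G. seg_end e = z}. set (drop (cut_hi e) (P e)))"
    then obtain e where e: "e \<in> edges G" "seg_end e = z" "h \<in> set (drop (cut_hi e) (P e))" by blast
    then obtain j where "cut_hi e \<le> j" "j < length (P e)" "P e ! j = h" unfolding in_set_drop_conv_nth by blast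
    then show ?thesis using e by blast
  qed simp
qed

lemma take_in_branch:
  assumes "e \<in> edges G" "j < cut_lo e" "j < length (P e)"
  shows "P e ! j \<in> branch (seg_start e)"
proof -
  have "P e ! j \<in> set (take (cut_lo e) (P e))" using assms unfolding in_set_take_conv_nth by blast
  then show ?thesis using assms(1) unfolding branch_def by blast
qed

lemma drop_in_branch:
  assumes "e \<in> edges G" "cut_hi e \<le> j" "j < length (P e)"
  shows "P e ! j \<in> branch (seg_end e)"
proof -
  have "P e ! j \<in> set (drop (cut_hi e) (P e))" using assms unfolding in_set_drop_conv_nth by blast
  then show ?thesis using assms(1) unfolding branch_def by blast
qed

lemma phi_in_branch: "phi z \<in> branch z" unfolding branch_def by simp

lemma branch_at_branch_vertex:
  assumes e: "e \<in> edges G" and j: "j < length (P e)"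
    and o: "(j < cut_lo e \<and> seg_start e = z) \<or> (cut_hi e \<le> j \<and> seg_end e = z)"
    and ph: "P e ! j \<in> phi ` verts G"
  shows "P e ! j = phi z"
proof -
  have ni: "\<not> (0 < j \<and> j < length (P e) - 1)"
  proof
    assume "0 < j \<and> j < length (P e) - 1"
    then have "P e ! j \<in> interior (P e)" using interior_conv_nth[of "P e"] seg_basic[OF e] by blast
    then show False using seg_interior_no_branch[OF e] ph by blast
  qed
  have c: "1 \<le> cut_lo e" "cut_lo e \<le> cut_hi e" "cut_hi e \<le> length (P e) - 1" using cut_bounds[OF e] by auto
  show ?thesis
  proof (cases "j < cut_lo e \<and> seg_start e = z")
    case True
    then have "j = 0" using ni c by linarith
    then show ?thesis using seg_nth_ends[OF e] True by simp
  next
    case False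
    then have o2: "cut_hi e \<le> j" "seg_end e = z" using o by auto
    then have "j = length (P e) - 1" using ni c j by linarith
    then show ?thesis using seg_nth_ends[OF e] o2 by simp
  qed
qed

text \<open>Branch sets of distinct vertices are disjoint: a shared vertex would be a branch vertex
  (impossible by the previous lemma) or an interior vertex of one segment lying in both pieces.\<close>

lemma branch_disjoint:
  assumes z: "z \<in> verts G" "z' \<in> verts G" "z \<noteq> z'"
  shows "branch z \<inter> branch z' = {}"
proof (rule ccontr)
  assume "branch z \<inter> branch z' \<noteq> {}"
  then obtain h where h: "h \<in> branch z" "h \<in> branch z'" by blast
  show False
  proof (cases "h \<in> phi ` verts G")
    case True
    have "h = phi z" using branch_elem[OF h(1)] branch_at_branch_vertex True by blast
    moreover have "h = phi z'" using branch_elem[OF h(2)] branch_at_branch_vertex True by blast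
    ultimately show False using z phi_inj unfolding inj_on_def by metis
  next
    case False
    have hz: "h \<noteq> phi z" "h \<noteq> phi z'" using False z by auto
    obtain e j where ej: "e \<in> edges G" "j < length (P e)" "P e ! j = h"
      "(j < cut_lo e \<and> seg_start e = z) \<or> (cut_hi e \<le> j \<and> seg_end e = z)"
      using branch_elem[OF h(1)] hz by blast
    obtain e' j' where ej': "e' \<in> edges G" "j' < length (P e')" "P e' ! j' = h"
      "(j' < cut_lo e' \<and> seg_start e' = z') \<or> (cut_hi e' \<le> j' \<and> seg_end e' = z')"
      using branch_elem[OF h(2)] hz by blast
    have hi: "h \<in> interior (P e)" using seg_nonbranch_interior[OF ej(1,2)] ej(3) False by simp
    have ee: "e' = e"
    proof (rule ccontr)
      assume "e' \<noteq> e"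
      then have "interior (P e) \<inter> set (P e') = {}" using seg_interior_disjoint ej(1) ej'(1) by metis
      moreover have "h \<in> set (P e')" using ej'(2,3) nth_mem by metis
      ultimately show False using hi by blast
    qed
    have jj: "j' = j"
      using ej ej' ee nth_eq_iff_index_eq[of "P e" j j'] seg_basic[OF ej(1)] by auto
    have c: "cut_lo e \<le> cut_hi e" using cut_bounds[OF ej(1)] by simp
    show False using ej(4) ej'(4) ee jj c z(3) by auto
  qed
qed

lemma branch_subset_S: "z \<in> verts G \<Longrightarrow> branch z \<subseteq> verts S"
proof -
  assume z: "z \<in> verts G"
  have p: "phi z \<in> verts S" using z phi_verts_S by blast
  have ts: "set (take l (P e)) \<subseteq> verts S" "set (drop l (P e)) \<subseteq> verts S" if "e \<in> edges G" for e l
    using seg_basic[OF that] set_take_subset[of l "P e"] set_drop_subset[of l "P e"] by auto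
  have a: "(\<Union>e\<in>{e\<in>edges G. seg_start e = z}. set (take (cut_lo e) (P e))) \<subseteq> verts S" using ts by blast
  have b: "(\<Union>e\<in>{e\<in>edges G. seg_end e = z}. set (drop (cut_hi e) (P e))) \<subseteq> verts S" using ts by blast
  show ?thesis unfolding branch_def using p a b by simp
qed

lemma initial_piece:
  assumes e: "e \<in> edges G"
  shows "connected_set H (set (take (cut_lo e) (P e))) \<and> phi (seg_start e) \<in> set (take (cut_lo e) (P e))"
proof -
  have c: "1 \<le> cut_lo e" using cut_bounds[OF e] by auto
  have l2: "length (P e) \<ge> 2" using seg_basic[OF e] by simp
  then have ne: "take (cut_lo e) (P e) \<noteq> []" using c by auto
  have "P e ! 0 \<in> set (take (cut_lo e) (P e))"
    unfolding in_set_take_conv_nth using c l2 by (intro exI[of _ 0]) auto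
  then show ?thesis
    using walk_connected[OF is_walk_take[OF seg_walk[OF e]] ne] seg_nth_ends[OF e] by simp
qed

lemma final_piece:
  assumes e: "e \<in> edges G"
  shows "connected_set H (set (drop (cut_hi e) (P e))) \<and> phi (seg_end e) \<in> set (drop (cut_hi e) (P e))"
proof -
  have c: "cut_hi e \<le> length (P e) - 1" using cut_bounds[OF e] by auto
  have l2: "length (P e) \<ge> 2" using seg_basic[OF e] by simp
  then have ne: "drop (cut_hi e) (P e) \<noteq> []" using c by simp
  have "P e ! (length (P e) - 1) \<in> set (drop (cut_hi e) (P e))"
    unfolding in_set_drop_conv_nth using c l2 by (intro exI[of _ "length (P e) - 1"]) auto
  then show ?thesis
    using walk_connected[OF is_walk_drop[OF seg_walk[OF e]] ne] seg_nth_ends[OF e] by simp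
qed

lemma branch_connected:
  assumes z: "z \<in> verts G"
  shows "connected_set H (branch z)"
proof -
  let ?F = "(\<lambda>e. set (take (cut_lo e) (P e))) ` {e\<in>edges G. seg_start e = z} \<union>
            (\<lambda>e. set (drop (cut_hi e) (P e))) ` {e\<in>edges G. seg_end e = z}"
  have "branch z = insert (phi z) (\<Union>?F)" unfolding branch_def by simp
  moreover have "connected_set H X \<and> phi z \<in> X" if "X \<in> ?F" for X
    using that initial_piece final_piece by blast
  ultimately show ?thesis using connected_set_Union_common[of ?F H "phi z"] by simp
qed

lemma loc_choice: "i < 3 \<Longrightarrow> valid_choice G (loc i) (kk i) (zz i)"
  using choice unfolding loc_def y_def by simp

lemma leg_facts:
  assumes i: "i < 3"
  shows "length (L i) \<ge> 2 \<and> distinct (L i) \<and> set (L i) \<subseteq> verts H \<and> is_walk H (L i) \<and>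
         hd (L i) = x \<and> y i \<in> verts S \<and> interior (L i) \<inter> verts S = {} \<and> last (L i) = y i"
proof -
  have p: "is_path H (L i)" "hd (L i) = x" "last (L i) \<in> verts S" "interior (L i) \<inter> verts S = {}"
    using legs[OF i] by auto
  then show ?thesis using is_path_walk[OF p(1)] unfolding is_path_def y_def by auto
qed

definition leg_part :: "nat \<Rightarrow> 'b set" where
  "leg_part i = set (if kk i then L i else butlast (L i))"

definition triad_set :: "'b set" where
  "triad_set = leg_part 0 \<union> leg_part 1 \<union> leg_part 2"

lemma leg_part_props:
  "i < 3 \<Longrightarrow> connected_set H (leg_part i) \<and> x \<in> leg_part i \<and> leg_part i \<subseteq> set (L i)"
proof -
  assume i: "i < 3"
  have l: "length (L i) \<ge> 2" "is_walk H (L i)" "hd (L i) = x" using leg_facts[OF i] by auto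
  have ne: "L i \<noteq> []" using l(1) by auto
  have x0: "L i ! 0 = x" using l(3) hd_conv_nth[OF ne] by simp
  show ?thesis
  proof (cases "kk i")
    case True
    then show ?thesis unfolding leg_part_def
      using walk_connected[OF l(2) ne] x0 ne by (auto simp: hd_in_set[OF ne, unfolded l(3)])
  next
    case False
    have bt: "butlast (L i) = take (length (L i) - 1) (L i)" by (simp add: butlast_conv_take)
    have ne2: "butlast (L i) \<noteq> []" using l(1) by (cases "L i") auto
    have c: "connected_set H (set (butlast (L i)))"
      using walk_connected[OF is_walk_take[OF l(2)] ne2[unfolded bt]] bt by simp
    have "x \<in> set (butlast (L i))"
      unfolding bt in_set_take_conv_nth using l(1) x0 by (intro exI[of _ 0]) auto
    then show ?thesis unfolding leg_part_def using False c by (auto dest: in_set_butlastD)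
  qed
qed

lemma triad_set_insert: "triad_set = insert x (\<Union> (leg_part ` {0, 1, 2}))"
proof -
  have "x \<in> leg_part 0" using leg_part_props[of 0] by simp
  then show ?thesis unfolding triad_set_def by auto
qed

lemma leg_part_subset: "i < 3 \<Longrightarrow> leg_part i \<subseteq> triad_set"
proof -
  assume "i < 3"
  then have "i = 0 \<or> i = 1 \<or> i = 2" by auto
  then show ?thesis unfolding triad_set_def by auto
qed

lemma triad_set_cases: "h \<in> triad_set \<Longrightarrow> \<exists>i<3. h \<in> leg_part i"
proof -
  assume "h \<in> triad_set"
  then have "h \<in> leg_part 0 \<or> h \<in> leg_part 1 \<or> h \<in> leg_part 2" unfolding triad_set_def by simp
  moreover have "(0::nat) < 3" "(1::nat) < 3" "(2::nat) < 3" by simp_all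
  ultimately show ?thesis by blast
qed

lemma triad_set_connected: "connected_set H triad_set"
  unfolding triad_set_insert by (rule connected_set_Union_common) (use leg_part_props in auto)

lemma triad_set_verts: "triad_set \<subseteq> verts H"
proof -
  have "leg_part i \<subseteq> verts H" if "i < 3" for i using leg_part_props[OF that] leg_facts[OF that] by blast
  then show ?thesis unfolding triad_set_def by simp
qed

lemma triad_set_elem:
  assumes h: "h \<in> triad_set"
  shows "h = x \<or> (\<exists>i<3. h \<in> interior (L i) \<or> (h = y i \<and> kk i))"
proof -
  obtain i where i: "i < 3" "h \<in> leg_part i" using triad_set_cases[OF h] by blast
  have l: "length (L i) \<ge> 2" "hd (L i) = x" "last (L i) = y i" "distinct (L i)"
    using leg_facts[OF i(1)] by auto
  have s: "set (L i) = insert x (insert (y i) (interior (L i)))"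
    using set_path_decomp[OF l(1)] l by simp
  show ?thesis
  proof (cases "kk i")
    case True then show ?thesis using i s unfolding leg_part_def by auto
  next
    case False
    then have "h \<in> set (butlast (L i))" using i unfolding leg_part_def by simp
    then have "h \<noteq> y i" "h \<in> set (L i)" using butlast_not_last[OF l(4)] l(3) in_set_butlastD by auto
    then show ?thesis using s i(1) by auto
  qed
qed

text \<open>The extra set avoids all branch sets: a cut end \<open>y i\<close> was left out of both pieces.\<close>

lemma triad_set_branch_disjoint: "z \<in> verts G \<Longrightarrow> triad_set \<inter> branch z = {}"
proof (rule ccontr)
  assume z: "z \<in> verts G" and "triad_set \<inter> branch z \<noteq> {}"
  then obtain h where h: "h \<in> triad_set" "h \<in> branch z" by blast
  have hS: "h \<in> verts S" using branch_subset_S[OF z] h(2) by blast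
  have "h \<noteq> x" using hS x_S by blast
  moreover have "h \<notin> interior (L i)" if "i < 3" for i using leg_facts[OF that] hS by blast
  ultimately obtain i where i: "i < 3" "h = y i" "kk i" using triad_set_elem[OF h(1)] by blast
  have E: "loc i \<in> edges G" using loc_choice[OF i(1)] i(3) unfolding valid_choice_def by simp
  have yi: "y i \<in> interior (P (loc i))" "y i \<notin> phi ` verts G" using loc_edge[OF i(1) E] by auto
  have k: "0 < port_index i" "port_index i < length (P (loc i)) - 1" "P (loc i) ! port_index i = y i"
    using port_index_props[OF i(1) E] by auto
  have cp: "cut_lo (loc i) = port_index i" "cut_hi (loc i) = Suc (port_index i)"
    using cut_at_port[OF i(1)] i(3) by auto
  have "h \<noteq> phi z" using yi(2) z i(2) by (metis imageI)
  then obtain e j where ej: "e \<in> edges G" "j < length (P e)" "P e ! j = h"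
    "(j < cut_lo e \<and> seg_start e = z) \<or> (cut_hi e \<le> j \<and> seg_end e = z)"
    using branch_elem[OF h(2)] by blast
  have ee: "e = loc i"
  proof (rule ccontr)
    assume "e \<noteq> loc i"
    then have "interior (P (loc i)) \<inter> set (P e) = {}" using seg_interior_disjoint E ej(1) by metis
    moreover have "h \<in> set (P e)" using ej(2,3) nth_mem by metis
    ultimately show False using yi(1) i(2) by blast
  qed
  have "j = port_index i"
    using ej(2,3) k ee i(2) nth_eq_iff_index_eq[of "P (loc i)" j "port_index i"] seg_basic[OF E]
    by auto
  then show False using ej(4) cp ee by auto
qed

text \<open>An edge not cut by a leg is realised where its two pieces meet.\<close>

lemma kept_edge_touches:
  assumes e: "{a, b} \<in> edges G" and nk: "\<And>i. i < 3 \<Longrightarrow> loc i = {a, b} \<Longrightarrow> \<not> kk i"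
  shows "touches H (branch a) (branch b)"
proof -
  define e where "e = {a, b}"
  note e = e[folded e_def] and nk = nk[folded e_def]
  have eq: "cut_lo e = cut_hi e" using cut_closed[OF e nk] by blast
  have c: "1 \<le> cut_lo e" "cut_lo e \<le> length (P e) - 1" using cut_bounds[OF e] by auto
  have l2: "length (P e) \<ge> 2" using seg_basic[OF e] by simp
  have h1: "P e ! (cut_lo e - 1) \<in> branch (seg_start e)"
    by (rule take_in_branch[OF e]) (use c l2 in auto)
  have h2: "P e ! (cut_lo e) \<in> branch (seg_end e)"
    by (rule drop_in_branch[OF e]) (use c l2 eq in auto)
  have "{P e ! (cut_lo e - 1), P e ! Suc (cut_lo e - 1)} \<in> edges H"
    by (rule seg_edge_H[OF e]) (use c l2 in auto)
  then have ed: "{P e ! (cut_lo e - 1), P e ! (cut_lo e)} \<in> edges H" using c by simp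
  then have "touches H (branch (seg_start e)) (branch (seg_end e))"
    unfolding touches_def using h1 h2 by blast
  moreover have "{seg_start e, seg_end e} = {a, b}" using seg_start_end[OF e] unfolding e_def by simp
  ultimately show ?thesis using touches_sym by (metis doubleton_eq_iff)
qed

text \<open>If leg \<open>i\<close> cuts its edge, its end \<open>y i\<close> lies in the extra set and is adjacent along the
  segment to the pieces of both ends of the edge.\<close>

lemma cut_end_touches:
  assumes i: "i < 3" and cut: "kk i" and z: "z \<in> loc i"
  shows "touches H triad_set (branch z)"
proof -
  define e where "e = loc i"
  have E: "e \<in> edges G" using loc_choice[OF i] cut unfolding valid_choice_def e_def by simp
  have k: "0 < port_index i" "port_index i < length (P e) - 1" "P e ! port_index i = y i"
    using port_index_props[OF i] E unfolding e_def by auto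
  have cp: "cut_lo e = port_index i" "cut_hi e = Suc (port_index i)"
    using cut_at_port[OF i] cut unfolding e_def by auto
  have "y i \<in> set (L i)" using leg_facts[OF i] by (metis last_in_set list.size(3) not_numeral_le_zero)
  then have yT: "y i \<in> triad_set" using leg_part_subset[OF i] cut unfolding leg_part_def by auto
  consider "z = seg_start e" | "z = seg_end e" using seg_start_end[OF E] z unfolding e_def by blast
  then show ?thesis
  proof cases
    case 1
    have "P e ! (port_index i - 1) \<in> branch (seg_start e)"
      by (rule take_in_branch) (use E k cp in auto)
    moreover have "{P e ! (port_index i - 1), P e ! Suc (port_index i - 1)} \<in> edges H"
      by (rule seg_edge_H) (use E k in auto)
    ultimately show ?thesis
      unfolding touches_def using 1 k yT by (auto simp: insert_commute)
  next
    case 2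
    have "P e ! Suc (port_index i) \<in> branch (seg_end e)"
      by (rule drop_in_branch) (use E k cp in auto)
    moreover have "{P e ! (port_index i), P e ! Suc (port_index i)} \<in> edges H"
      by (rule seg_edge_H) (use E k in auto)
    ultimately show ?thesis unfolding touches_def using 2 k yT by auto
  qed
qed

text \<open>Otherwise the end \<open>y i\<close> belongs to the branch set of the chosen vertex \<open>zz i\<close>.\<close>

lemma absorbed_end_in_branch:
  assumes i: "i < 3" and keep: "\<not> kk i"
  shows "y i \<in> branch (zz i)"
proof (cases "loc i \<in> edges G")
  case E: True
  define e where "e = loc i"
  have z: "zz i \<in> e" using loc_choice[OF i] keep unfolding valid_choice_def e_def by simp
  have k: "port_index i < length (P e) - 1" "P e ! port_index i = y i"
    using port_index_props[OF i E] unfolding e_def by auto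
  show ?thesis
  proof (cases "zz i = seg_start e")
    case True
    have "cut_lo e = Suc (port_index i)" using cut_at_port[OF i] keep True unfolding e_def by auto
    then have "P e ! port_index i \<in> branch (seg_start e)"
      by (intro take_in_branch) (use E k in \<open>auto simp: e_def\<close>)
    then show ?thesis using k True by simp
  next
    case False
    have "cut_hi e = port_index i" using cut_at_port[OF i] keep False unfolding e_def by auto
    then have "P e ! port_index i \<in> branch (seg_end e)"
      by (intro drop_in_branch) (use E k in \<open>auto simp: e_def\<close>)
    moreover have "zz i = seg_end e" using seg_start_end[of e] E z False unfolding e_def by blast
    ultimately show ?thesis using k by simp
  qed
next
  case False
  obtain v where "v \<in> verts G" "loc i = {v}" "phi v = y i" using loc_vertex[OF i False] by blast
  moreover have "zz i \<in> loc i" using loc_choice[OF i] keep unfolding valid_choice_def by simp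
  ultimately show ?thesis using phi_in_branch by (metis singletonD)
qed

text \<open>\<dots> and is adjacent to the second-last vertex of the leg, which lies in the extra set.\<close>

lemma absorbed_end_touches:
  assumes i: "i < 3" and keep: "\<not> kk i"
  shows "touches H triad_set (branch (zz i))"
proof -
  have l: "length (L i) \<ge> 2" "last (L i) = y i" "is_path H (L i)"
    using leg_facts[OF i] legs[OF i] by auto
  define n where "n = length (L i)"
  have "L i ! (n - 2) \<in> set (butlast (L i))"
    unfolding butlast_conv_take in_set_take_conv_nth using l(1) unfolding n_def
    by (intro exI[of _ "length (L i) - 2"]) auto
  then have hT: "L i ! (n - 2) \<in> triad_set" using leg_part_subset[OF i] keep unfolding leg_part_def by auto
  have "{L i ! (n - 2), L i ! Suc (n - 2)} \<in> edges H" using l(3) l(1) unfolding is_path_def n_def by auto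
  moreover have "L i ! Suc (n - 2) = y i"
  proof -
    have "L i \<noteq> []" using l(1) by auto
    then show ?thesis using l(1,2) last_conv_nth[of "L i"] unfolding n_def
      by (simp add: Suc_diff_Suc numeral_2_eq_2)
  qed
  ultimately show ?thesis
    unfolding touches_def using hT absorbed_end_in_branch[OF i keep] by metis
qed

lemma triad_set_touches:
  assumes i: "i < 3" and z: "z \<in> attach (loc i) (kk i) (zz i)"
  shows "touches H triad_set (branch z)"
  using z cut_end_touches[OF i] absorbed_end_touches[OF i] unfolding attach_def
  by (cases "kk i") auto

theorem triad_augmented:
  "augmented_model H G branch triad_set
     (removed (loc 0) (kk 0) \<union> removed (loc 1) (kk 1) \<union> removed (loc 2) (kk 2))
     (attach (loc 0) (kk 0) (zz 0) \<union> attach (loc 1) (kk 1) (zz 1) \<union> attach (loc 2) (kk 2) (zz 2))"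
  unfolding augmented_model_def
proof (intro conjI ballI impI allI)
  fix z assume z: "z \<in> verts G"
  show "branch z \<noteq> {}" using phi_in_branch by blast
  show "branch z \<subseteq> verts H" using branch_subset_S[OF z] verts_S_H by blast
  show "connected_set H (branch z)" using branch_connected[OF z] .
  show "triad_set \<inter> branch z = {}" using triad_set_branch_disjoint[OF z] .
next
  fix z z' assume "z \<in> verts G" "z' \<in> verts G" "z \<noteq> z'"
  then show "branch z \<inter> branch z' = {}" using branch_disjoint by blast
next
  fix a b
  assume e: "{a, b} \<in> edges G - (removed (loc 0) (kk 0) \<union> removed (loc 1) (kk 1) \<union> removed (loc 2) (kk 2))"
  have nk: "\<not> kk i" if "i < 3" "loc i = {a, b}" for i
  proof
    assume "kk i"
    then have "{a, b} \<in> removed (loc i) (kk i)" using that unfolding removed_def by simp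
    moreover have "i = 0 \<or> i = 1 \<or> i = 2" using that(1) by auto
    ultimately show False using e by auto
  qed
  show "touches H (branch a) (branch b)"
    using kept_edge_touches[OF _ nk] e by blast
next
  show "triad_set \<noteq> {}" unfolding triad_set_insert by simp
  show "triad_set \<subseteq> verts H" using triad_set_verts .
  show "connected_set H triad_set" using triad_set_connected .
next
  fix z
  assume "z \<in> attach (loc 0) (kk 0) (zz 0) \<union> attach (loc 1) (kk 1) (zz 1) \<union> attach (loc 2) (kk 2) (zz 2)"
  moreover have "(0::nat) < 3" "(1::nat) < 3" "(2::nat) < 3" by simp_all
  ultimately obtain i where "i < 3" "z \<in> attach (loc i) (kk i) (zz i)" by blast
  then show "touches H triad_set (branch z)" using triad_set_touches by blast
qed

end

context subdivision
begin

lemma triad_ends_locations: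
  fixes y :: "nat \<Rightarrow> 'b"
  assumes D: "\<forall>C\<in>D. C \<subseteq> edges G" and y: "\<forall>i<3. y i \<in> verts S"
    and pairwise: "\<forall>i<3. \<forall>j<3. \<exists>C\<in>D. y i \<in> induced_dverts P C \<and> y j \<in> induced_dverts P C"
    and not_all: "\<not> (\<exists>C\<in>D. \<forall>i<3. y i \<in> induced_dverts P C)"
  shows "triad_locations D (location (y 0)) (location (y 1)) (location (y 2))"
proof -
  have iff: "y i \<in> induced_dverts P C \<longleftrightarrow> on_disk C (location (y i))" if "i < 3" "C \<in> D" for i C
    using induced_dverts_iff_on_disk[of "y i" C] y D that by blast
  have cases3: "i = 0 \<or> i = 1 \<or> i = 2" if "i < (3::nat)" for i using that by auto
  have pair: "\<exists>C\<in>D. on_disk C (location (y i)) \<and> on_disk C (location (y j))"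
    if "i < 3" "j < 3" for i j using pairwise iff that by blast
  have "\<not> (\<exists>C\<in>D. on_disk C (location (y 0)) \<and> on_disk C (location (y 1)) \<and> on_disk C (location (y 2)))"
  proof
    assume "\<exists>C\<in>D. on_disk C (location (y 0)) \<and> on_disk C (location (y 1)) \<and> on_disk C (location (y 2))"
    then obtain C where "C \<in> D" "\<forall>i<3. on_disk C (location (y i))" using cases3 by blast
    then show False using not_all iff by blast
  qed
  then show ?thesis unfolding triad_locations_def using pair[of 0 1] pair[of 0 2] pair[of 1 2] by simp
qed

lemma triad_augmented_model:
  fixes L :: "nat \<Rightarrow> 'b list"
  assumes x: "x \<in> verts H - verts S"
    and legs: "\<forall>i<3. is_path H (L i) \<and> hd (L i) = x \<and> last (L i) \<in> verts S \<and>
                     interior (L i) \<inter> verts S = {}"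
    and choice: "valid_choice G (location (last (L 0))) k0 z0"
      "valid_choice G (location (last (L 1))) k1 z1" "valid_choice G (location (last (L 2))) k2 z2"
    and distinct: "location (last (L 0)) \<noteq> location (last (L 1))"
      "location (last (L 0)) \<noteq> location (last (L 2))" "location (last (L 1)) \<noteq> location (last (L 2))"
  shows "\<exists>B T. augmented_model H G B T
      (removed (location (last (L 0))) k0 \<union> removed (location (last (L 1))) k1 \<union>
       removed (location (last (L 2))) k2)
      (attach (location (last (L 0))) k0 z0 \<union> attach (location (last (L 1))) k1 z1 \<union>
       attach (location (last (L 2))) k2 z2)"
proof -
  define kk where "kk i = (if i = 0 then k0 else if i = 1 then k1 else k2)" for i :: nat
  define zz where "zz i = (if i = 0 then z0 else if i = 1 then z1 else z2)" for i :: nat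
  have cases3: "i = 0 \<or> i = 1 \<or> i = 2" if "i < (3::nat)" for i using that by auto
  interpret triad_model G H S phi P x L kk zz
  proof unfold_locales
    show "x \<in> verts H" "x \<notin> verts S" using x by auto
    show "is_path H (L i) \<and> hd (L i) = x \<and> last (L i) \<in> verts S \<and> interior (L i) \<inter> verts S = {}"
      if "i < 3" for i using legs that by blast
    show "valid_choice G (location (last (L i))) (kk i) (zz i)" if "i < 3" for i
      using cases3[OF that] choice unfolding kk_def zz_def by auto
    show "location (last (L i)) \<noteq> location (last (L j))" if "i < 3" "j < 3" "i \<noteq> j" for i j
      using cases3[OF that(1)] cases3[OF that(2)] that(3) distinct by auto
  qed
  show ?thesis using triad_augmented unfolding loc_def y_def kk_def zz_def by auto
qed

end

text \<open>The ends of the triad have locations in \<open>G\<close> forming a triad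
  configuration; the combinatorial analysis resolves it into choices for the three legs, which
  give an augmented model of \<open>G\<close> in \<open>H\<close>, and hence a 3-enlargement or a weak 8-enlargement as
  a minor.\<close>

theorem lemma5p3:
  fixes G :: "'a ugr" and H :: "'b ugr" and S :: "'b ugr"
    and D :: "'a set set set" and phi :: "'a \<Rightarrow> 'b" and P :: "'a set \<Rightarrow> 'b list"
  assumes "ugraph G" and "ugraph H"
    and "connected_graph G" and "card (verts G) \<ge> 5"
    and "\<forall>v\<in>verts G. deg G v \<noteq> 2"
    and "weak_disk_system G D"
    and "subgraph S H" and "subdivision_model G S phi P"
    and "has_triad H S D P"
  shows "\<exists>K :: ('a + bool) ugr. has_minor H K \<and>
           (enlargement1 G D K \<or> enlargement3 G D K \<or>
            weak_enlargement8 G D K \<or> weak_enlargement9 G D K)"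
proof -
  interpret disk_graph G D using assms(1,3-6) by unfold_locales
  interpret subdivision G H S phi P using assms(1,7,8) by unfold_locales
  obtain x and L :: "nat \<Rightarrow> 'b list" where x: "x \<in> verts H - verts S"
    and legs: "\<forall>i<3. is_path H (L i) \<and> hd (L i) = x \<and> last (L i) \<in> verts S \<and>
                     interior (L i) \<inter> verts S = {}"
    and pairwise: "\<forall>i<3. \<forall>j<3. \<exists>C\<in>D. last (L i) \<in> induced_dverts P C \<and> last (L j) \<in> induced_dverts P C"
    and not_all: "\<not> (\<exists>C\<in>D. \<forall>i<3. last (L i) \<in> induced_dverts P C)"
    using assms(9) unfolding has_triad_def by blast
  define l where "l i = location (last (L i))" for i
  have triad: "triad_locations D (l 0) (l 1) (l 2)"
    unfolding l_def using triad_ends_locations[of D "\<lambda>i. last (L i)"] wds_disk_edges[OF wds]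
      legs pairwise not_all by blast
  have loc: "is_location G (l i)" if "i < 3" for i
    unfolding l_def using location_is_location legs that by blast
  obtain k0 z0 k1 z1 k2 z2 where choice: "valid_choice G (l 0) k0 z0" "valid_choice G (l 1) k1 z1"
      "valid_choice G (l 2) k2 z2"
    and pattern: "enlargement_pattern (attach (l 0) k0 z0 \<union> attach (l 1) k1 z1 \<union> attach (l 2) k2 z2)
       (removed (l 0) k0 \<union> removed (l 1) k1 \<union> removed (l 2) k2)"
    using triad_locations_resolvable[OF loc loc loc triad] unfolding resolvable_def by auto
  obtain B T where "augmented_model H G B T (removed (l 0) k0 \<union> removed (l 1) k1 \<union> removed (l 2) k2)
      (attach (l 0) k0 z0 \<union> attach (l 1) k1 z1 \<union> attach (l 2) k2 z2)"
    using triad_augmented_model[OF x legs choice[unfolded l_def]]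
      triad_locations_distinct[OF triad] unfolding l_def by blast
  moreover have "attach (l 0) k0 z0 \<union> attach (l 1) k1 z1 \<union> attach (l 2) k2 z2 \<subseteq> verts G"
    using attach_subset_verts[OF ugraph loc] choice by simp
  ultimately show ?thesis using pattern_minor pattern by blast
qed

end
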